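(* There is a deterministic algorithm in the $\mathsf{LOCAL}$ model that solves $\mathsf{Broadcast}$ on any $n$-vertex network in $O(n\log n\log N)$ time using $O(\log n\log N)$ energy.
   Context: Radio network: connected undirected graph with $n$ vertices; synchronized slots; each vertex transmits, listens or idles per slot, transmit/listen costing one unit of energy; energy = maximum per-vertex number of such slots. $\mathsf{LOCAL}$: a listener receives every message sent by its neighbors in that slot. Deterministic setting: vertices have distinct IDs in $\{1,\ldots,N\}$. $\mathsf{Broadcast}$: a source vertex holds a message that all vertices must learn. *)

theory Defs
  imports Complex_Main "HOL-Library.Multiset"
begin

definition radio_network :: "nat set \<Rightarrow> (nat \<Rightarrow> nat \<Rightarrow> bool) \<Rightarrow> bool" where
  "radio_network V E \<longleftrightarrow> finite V \<and> V \<noteq> {} \<and>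
     (\<forall>u v. E u v \<longrightarrow> u \<in> V \<and> v \<in> V) \<and>
     (\<forall>u v. E u v \<longrightarrow> E v u) \<and> (\<forall>u. \<not> E u u) \<and>
     (\<forall>u\<in>V. \<forall>v\<in>V. E\<^sup>*\<^sup>* u v)"

definition id_assignment :: "nat set \<Rightarrow> (nat \<Rightarrow> nat) \<Rightarrow> nat \<Rightarrow> bool" where
  "id_assignment V ID N \<longleftrightarrow> inj_on ID V \<and> ID ` V \<subseteq> {1..N}"

text \<open>Local state (and also message/packet contents): an optional copy of the
  broadcast message together with arbitrary auxiliary data.\<close>
type_synonym 'm lstate = "'m option \<times> nat list"

datatype 'p action = is_transmit: Transmit (payload: 'p) | Listen | Idle

text \<open>A deterministic algorithm: initial state from (n, N, own ID, message if source),
  action chosen from the current state, state update from the current state and what was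
  received (Some multiset of all messages sent by neighbours if the vertex listened,
  None otherwise), and an output function.\<close>
datatype 'm algo = Algo
  (a_init: "nat \<Rightarrow> nat \<Rightarrow> nat \<Rightarrow> 'm option \<Rightarrow> 'm lstate")
  (a_act: "'m lstate \<Rightarrow> 'm lstate action")
  (a_upd: "'m lstate \<Rightarrow> 'm lstate multiset option \<Rightarrow> 'm lstate")
  (a_out: "'m lstate \<Rightarrow> 'm option")

fun exec :: "'m algo \<Rightarrow> nat \<Rightarrow> nat set \<Rightarrow> (nat \<Rightarrow> nat \<Rightarrow> bool) \<Rightarrow> (nat \<Rightarrow> nat) \<Rightarrow> nat \<Rightarrow> 'm
    \<Rightarrow> nat \<Rightarrow> nat \<Rightarrow> 'm lstate" where
  "exec A N V E ID s m 0 = (\<lambda>v. a_init A (card V) N (ID v) (if v = s then Some m else None))"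
| "exec A N V E ID s m (Suc t) = (let cur = exec A N V E ID s m t in
     (\<lambda>v. a_upd A (cur v)
        (if a_act A (cur v) = Listen
         then Some (image_mset (\<lambda>u. payload (a_act A (cur u)))
                     (mset_set {u \<in> V. E v u \<and> is_transmit (a_act A (cur u))}))
         else None)))"

definition energy :: "'m algo \<Rightarrow> nat \<Rightarrow> nat set \<Rightarrow> (nat \<Rightarrow> nat \<Rightarrow> bool) \<Rightarrow> (nat \<Rightarrow> nat) \<Rightarrow> nat
    \<Rightarrow> 'm \<Rightarrow> nat \<Rightarrow> nat \<Rightarrow> nat" where
  "energy A N V E ID s m T v = card {t. t < T \<and> a_act A (exec A N V E ID s m t v) \<noteq> Idle}"

end

theory Submission
  imports Defs "HOL-Library.Countable"
begin

(*
  Clusters are grown as in Boruvka's algorithm. A cluster is named by its smallest ID, and in each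
  round it points to the neighbouring cluster of smallest name if that name is smaller than its own.
  In an exchange phase of 2 log N slots every vertex learns the cluster names of its neighbours: two
  adjacent IDs differ in some bit, and in the slot for that bit and value one of them transmits while
  the other listens. The pointers are then realised in log N sub-phases: in sub-phase j a part whose
  pointer leaves it at highest differing bit j is a leaf; its target has a 0 where the leaf has a 1
  and agrees with it above, so the target is not a leaf itself, and all leaves are glued to their
  targets, forming stars. Inside a part information is propagated by a sweep of 2n slots along a BFS
  tree of the part, which all its members know, and each vertex is awake in O(1) of these slots. Two
  rounds at least halve the number of clusters, so after 2 log n rounds everybody holds the source's
  message; a round takes O(n log N) slots and O(log N) energy.
*)

section \<open>The algorithm\<close>

text \<open>\<open>Me x\<close>: vertex \<open>x\<close> belongs to the part; \<open>Nb r x c y b\<close>: in round \<open>r\<close> the edge \<open>x y\<close>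
  joins the cluster of \<open>x\<close>, named \<open>c\<close>, to the cluster of \<open>y\<close>, named \<open>b\<close>.\<close>

datatype fact = Me nat | Nb nat nat nat nat nat
instance fact :: countable by countable_datatype

datatype aux = Aux (clock: nat) (own_id: nat) (net_size: nat) (id_bound: nat) (knowledge: "fact list") (collected: "fact list")
instance aux :: countable by countable_datatype

text \<open>Local states of the model carry a list of naturals, so the record is stored through its
  countable encoding.\<close>

definition encode_aux :: "aux \<Rightarrow> nat list" where "encode_aux a = [to_nat a]"
definition decode_aux :: "nat list \<Rightarrow> aux" where "decode_aux l = from_nat (hd l)"
lemma decode_aux_encode_aux[simp]: "decode_aux (encode_aux a) = a"
  by (simp add: encode_aux_def decode_aux_def)

definition nbits :: "nat \<Rightarrow> nat" where "nbits N = (LEAST k. N < 2^k)"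

lemma nbits_gt: "N < 2 ^ nbits N"
proof -
  have "N < 2 ^ N" by (rule less_exp)
  then show ?thesis unfolding nbits_def by (rule LeastI)
qed

lemma nbits_pos: "N \<ge> 1 \<Longrightarrow> nbits N \<ge> 1"
  using nbits_gt[of N] by (cases "nbits N") auto

lemma nbits_le: "N \<ge> 1 \<Longrightarrow> 2 ^ (nbits N - 1) \<le> N"
proof -
  assume N: "N \<ge> 1"
  have "nbits N - 1 < nbits N" using nbits_pos[OF N] by simp
  then have "\<not> N < 2 ^ (nbits N - 1)" unfolding nbits_def by (rule not_less_Least)
  then show ?thesis by simp
qed

definition sweep_len :: "nat \<Rightarrow> nat" where "sweep_len n = 2 * n + 1"
definition round_len :: "nat \<Rightarrow> nat \<Rightarrow> nat" where "round_len n N = 2 * nbits N + (2 * nbits N + 1) * sweep_len n"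

definition broadcast_time :: "nat \<Rightarrow> nat \<Rightarrow> nat" where
  "broadcast_time n N = 2 * nbits n * round_len n N"

definition energy_budget :: "nat \<Rightarrow> nat \<Rightarrow> nat" where
  "energy_budget n N = 2 * nbits n * (2 * nbits N + (2 * nbits N + 1) * 5)"

text \<open>A round consists of \<open>2 L\<close> exchange slots (bit \<open>b\<close>, value \<open>p\<close>), where \<open>L = nbits N\<close>, followed by
  \<open>2 L + 1\<close> segments, each a handshake slot and a sweep of \<open>2 n\<close> slots. Segment 0 gathers the
  exchanged facts inside clusters; segments \<open>2 j + 1\<close> and \<open>2 j + 2\<close> form merge sub-phase \<open>j\<close>.\<close>

datatype mode = Exchange nat nat nat | Handshake nat nat | Sweep nat nat nat

definition slot_mode :: "nat \<Rightarrow> nat \<Rightarrow> nat \<Rightarrow> mode" where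
  "slot_mode n N t = (let L = nbits N; r = t div round_len n N; ofs = t mod round_len n N in
     if ofs < 2 * L then Exchange r (ofs div 2) (ofs mod 2)
     else (let q = ofs - 2 * L; sg = q div sweep_len n; p = q mod sweep_len n in
       if p = 0 then Handshake r sg else Sweep r sg (p - 1)))"

definition commit :: "nat \<Rightarrow> nat \<Rightarrow> nat \<Rightarrow> bool" where
  "commit n N t = (case slot_mode n N t of Sweep r sg w \<Rightarrow> even sg \<and> w + 1 = 2 * n | _ \<Rightarrow> False)"

definition members :: "fact set \<Rightarrow> nat set" where "members K = {x. Me x \<in> K}"
definition group_name :: "fact set \<Rightarrow> nat" where "group_name K = Min (members K)"
definition known_adj :: "fact set \<Rightarrow> nat \<Rightarrow> nat \<Rightarrow> bool" where
  "known_adj K x y = (x \<in> members K \<and> y \<in> members K \<and> (\<exists>r a b. Nb r x a y b \<in> K \<or> Nb r y a x b \<in> K))"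

fun known_ball :: "fact set \<Rightarrow> nat \<Rightarrow> nat set" where
  "known_ball K 0 = {group_name K}"
| "known_ball K (Suc k) = known_ball K k \<union> {y. \<exists>x\<in>known_ball K k. known_adj K x y}"

definition level :: "fact set \<Rightarrow> nat \<Rightarrow> nat" where "level K x = (LEAST k. x \<in> known_ball K k)"

definition known_names :: "fact set \<Rightarrow> nat \<Rightarrow> nat set" where
  "known_names K r = {c. \<exists>x y b. Nb r x c y b \<in> K}"
definition known_out :: "fact set \<Rightarrow> nat \<Rightarrow> nat \<Rightarrow> nat set" where
  "known_out K r c = {b. \<exists>x y. Nb r x c y b \<in> K \<and> b \<noteq> c}"
definition known_target :: "fact set \<Rightarrow> nat \<Rightarrow> nat \<Rightarrow> nat option" where
  "known_target K r c = (if known_out K r c \<noteq> {} \<and> Min (known_out K r c) < c then Some (Min (known_out K r c)) else None)"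
definition top_diff_bit :: "nat \<Rightarrow> nat \<Rightarrow> nat" where "top_diff_bit a b = (LEAST l. a div 2 ^ Suc l = b div 2 ^ Suc l)"
definition known_leaves :: "fact set \<Rightarrow> nat \<Rightarrow> nat \<Rightarrow> nat set" where
  "known_leaves K r j = {c \<in> known_names K r. \<exists>t. known_target K r c = Some t \<and> t \<notin> known_names K r \<and> top_diff_bit c t = j}"
definition known_is_leaf :: "fact set \<Rightarrow> nat \<Rightarrow> nat \<Rightarrow> bool" where "known_is_leaf K r j = (known_leaves K r j \<noteq> {})"
definition known_leaf_edge :: "fact set \<Rightarrow> nat \<Rightarrow> nat \<Rightarrow> nat \<times> nat" where
  "known_leaf_edge K r j = (let c = Min (known_leaves K r j); t = the (known_target K r c);
      x = Min {x. \<exists>y. Nb r x c y t \<in> K}; y = Min {y. Nb r x c y t \<in> K} in (x, y))"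

text \<open>\<open>Some True\<close>: transmit, \<open>Some False\<close>: listen. In the first half of a sweep a vertex at depth
  \<open>l\<close> sends towards the root in slot \<open>n - 1 - l\<close>; in the second half it sends away from it in
  slot \<open>n + l\<close>.\<close>

definition sweep_act :: "nat \<Rightarrow> nat \<Rightarrow> nat \<Rightarrow> bool option" where
  "sweep_act n w l = (if w < n then (if w + l + 1 = n then Some True else if w + l + 2 = n then Some False else None)
       else (if w - n = l then Some True else if w - n + 1 = l then Some False else None))"

definition subphase_of :: "nat \<Rightarrow> nat" where "subphase_of sg = (if odd sg then sg div 2 else sg div 2 - 1)"

lemma subphase_of_odd: "subphase_of (2 * j + 1) = j"
  by (simp add: subphase_of_def)

lemma subphase_of_even: "subphase_of (2 * j + 2) = j"
  by (simp add: subphase_of_def)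

definition is_leaf_endpoint :: "fact set \<Rightarrow> nat \<Rightarrow> nat \<Rightarrow> nat \<Rightarrow> bool" where
  "is_leaf_endpoint K r j x = (known_is_leaf K r j \<and> fst (known_leaf_edge K r j) = x)"

type_synonym 'm st = "'m option \<times> nat list"

definition act :: "'m st \<Rightarrow> 'm st action" where
  "act q = (let a = decode_aux (snd q); K = set (knowledge a) in
     case slot_mode (net_size a) (id_bound a) (clock a) of
       Exchange r b p \<Rightarrow> (if (own_id a div 2 ^ b) mod 2 = p then Transmit q else Listen)
     | Handshake r sg \<Rightarrow> (if sg = 0 then Idle
          else if odd sg then (if is_leaf_endpoint K r (subphase_of sg) (own_id a) then Transmit q else Listen)
          else (if is_leaf_endpoint K r (subphase_of sg) (own_id a) then Listen else Transmit q))
     | Sweep r sg w \<Rightarrow> (case sweep_act (net_size a) w (level K (own_id a)) of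
          Some True \<Rightarrow> Transmit q | Some False \<Rightarrow> Listen | None \<Rightarrow> Idle))"

definition accepts :: "aux \<Rightarrow> 'm st \<Rightarrow> bool" where
  "accepts a q = (let b = decode_aux (snd q); K = set (knowledge a); Kq = set (knowledge b) in
     case slot_mode (net_size a) (id_bound a) (clock a) of
       Exchange r bb p \<Rightarrow> False
     | Handshake r sg \<Rightarrow> (if odd sg then is_leaf_endpoint Kq r (subphase_of sg) (own_id b) \<and> snd (known_leaf_edge Kq r (subphase_of sg)) = own_id a
                    else own_id b = snd (known_leaf_edge K r (subphase_of sg)))
     | Sweep r sg w \<Rightarrow> group_name Kq = group_name K)"

definition newinfo :: "'m st \<Rightarrow> 'm st multiset option \<Rightarrow> 'm option \<times> fact set" where
  "newinfo q M = (let a = decode_aux (snd q) in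
     case M of None \<Rightarrow> (fst q, {})
     | Some M \<Rightarrow> (case slot_mode (net_size a) (id_bound a) (clock a) of
          Exchange r b p \<Rightarrow> (fst q, (\<lambda>q'. Nb r (own_id a) (group_name (set (knowledge a))) (own_id (decode_aux (snd q'))) (group_name (set (knowledge (decode_aux (snd q')))))) ` set_mset M)
        | _ \<Rightarrow> (let P = {q' \<in> set_mset M. accepts a q'} in
              (if fst q \<noteq> None then fst q else if (\<exists>q'\<in>P. fst q' \<noteq> None) then fst (SOME q'. q' \<in> P \<and> fst q' \<noteq> None) else None,
               \<Union>q'\<in>P. set (collected (decode_aux (snd q')))))))"

definition upd :: "'m st \<Rightarrow> 'm st multiset option \<Rightarrow> 'm st" where
  "upd q M = (let a = decode_aux (snd q); ni = newinfo q M;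
     collected' = collected a @ (SOME xs. set xs = snd ni);
     knowledge' = (if commit (net_size a) (id_bound a) (clock a) then collected' else knowledge a)
   in (fst ni, encode_aux (Aux (Suc (clock a)) (own_id a) (net_size a) (id_bound a) knowledge' collected')))"

definition init :: "nat \<Rightarrow> nat \<Rightarrow> nat \<Rightarrow> 'm option \<Rightarrow> 'm st" where
  "init n N i mo = (mo, encode_aux (Aux 0 i n N [Me i] [Me i]))"

definition broadcast_alg :: "'m algo" where "broadcast_alg = Algo init act upd fst"

section \<open>Binary expansions of identifiers\<close>

lemma top_diff_bit_props:
  assumes "a \<noteq> (b::nat)"
  shows "a div 2 ^ Suc (top_diff_bit a b) = b div 2 ^ Suc (top_diff_bit a b)"
    and "a div 2 ^ top_diff_bit a b \<noteq> b div 2 ^ top_diff_bit a b"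
proof -
  have ex: "\<exists>l. a div 2 ^ Suc l = b div 2 ^ Suc l"
  proof
    have "(2::nat) ^ a \<le> 2 ^ Suc (a + b)" "(2::nat) ^ b \<le> 2 ^ Suc (a + b)"
      by (rule power_increasing; simp)+
    then have "a < 2 ^ Suc (a + b)" "b < 2 ^ Suc (a + b)"
      using less_exp[of a] less_exp[of b] by linarith+
    then show "a div 2 ^ Suc (a+b) = b div 2 ^ Suc (a+b)" by simp
  qed
  show 1: "a div 2 ^ Suc (top_diff_bit a b) = b div 2 ^ Suc (top_diff_bit a b)"
    unfolding top_diff_bit_def using ex by (rule LeastI_ex)
  show "a div 2 ^ top_diff_bit a b \<noteq> b div 2 ^ top_diff_bit a b"
  proof (cases "top_diff_bit a b")
    case 0 then show ?thesis using assms by simp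
  next
    case (Suc k)
    have "k < top_diff_bit a b" using Suc by simp
    then have "\<not> a div 2 ^ Suc k = b div 2 ^ Suc k" unfolding top_diff_bit_def by (rule not_less_Least)
    then show ?thesis using Suc by simp
  qed
qed

lemma top_diff_bit_parity:
  assumes "b < (a::nat)"
  shows "odd (a div 2 ^ top_diff_bit a b)" "even (b div 2 ^ top_diff_bit a b)"
    and "a div 2 ^ Suc (top_diff_bit a b) = b div 2 ^ Suc (top_diff_bit a b)"
proof -
  define h where "h = top_diff_bit a b"
  have "a div 2 ^ Suc h = b div 2 ^ Suc h"
    using top_diff_bit_props(1)[of a b] assms by (simp only: h_def)
  then have 1: "a div 2 ^ h div 2 = b div 2 ^ h div 2"
    by (metis div_mult2_eq power_Suc2)
  have 2: "a div 2 ^ h \<noteq> b div 2 ^ h" using top_diff_bit_props(2)[of a b] assms by (simp add: h_def)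
  have 3: "b div 2 ^ h \<le> a div 2 ^ h" using assms by (simp add: div_le_mono)
  have "odd (a div 2 ^ h) \<and> even (b div 2 ^ h)"
  proof -
    define A where "A = a div 2 ^ h"
    define B where "B = b div 2 ^ h"
    have e: "A = 2 * (A div 2) + A mod 2" "B = 2 * (B div 2) + B mod 2" by simp_all
    have "A mod 2 < 2" "B mod 2 < 2" by simp_all
    then have "A mod 2 = 1 \<and> B mod 2 = 0" using e 1 2 3 unfolding A_def[symmetric] B_def[symmetric] by linarith
    then show ?thesis by (simp add: A_def B_def odd_iff_mod_2_eq_one even_iff_mod_2_eq_zero)
  qed
  then show "odd (a div 2 ^ top_diff_bit a b)" "even (b div 2 ^ top_diff_bit a b)" by (auto simp: h_def)
  show "a div 2 ^ Suc (top_diff_bit a b) = b div 2 ^ Suc (top_diff_bit a b)" using top_diff_bit_props(1)[of a b] assms by simp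
qed

lemma top_diff_bit_less:
  assumes "a < 2 ^ L" "b < 2 ^ L" "L \<ge> 1"
  shows "top_diff_bit a b < L"
proof -
  have "a div 2 ^ Suc (L - 1) = b div 2 ^ Suc (L - 1)" using assms by simp
  then have "top_diff_bit a b \<le> L - 1" unfolding top_diff_bit_def by (rule Least_le)
  then show ?thesis using assms by simp
qed

lemma bits_differ:
  assumes "u \<noteq> (v::nat)" "u < 2 ^ L" "v < 2 ^ L"
  shows "\<exists>b<L. (u div 2 ^ b) mod 2 \<noteq> (v div 2 ^ b) mod 2"
proof (rule ccontr)
  assume "\<not> ?thesis"
  then have lo: "\<forall>b<L. (u div 2 ^ b) mod 2 = (v div 2 ^ b) mod 2" by blast
  have "bit u b = bit v b" for b
  proof (cases "b < L")
    case True then show ?thesis using lo by (simp add: bit_iff_odd odd_iff_mod_2_eq_one)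
  next
    case False
    then have "(2::nat) ^ L \<le> 2 ^ b" by (intro power_increasing) auto
    then have "u < 2 ^ b" "v < 2 ^ b" using assms by linarith+
    then have "u div 2 ^ b = 0" "v div 2 ^ b = 0" by simp_all
    then show ?thesis by (simp add: bit_iff_odd)
  qed
  then have "u = v" by (simp add: bit_eq_iff)
  then show False using assms by simp
qed

section \<open>The slot schedule\<close>

lemma div_mod_offset: "a < (R::nat) \<Longrightarrow> (r * R + a) div R = r \<and> (r * R + a) mod R = a"
  by simp

lemma slot_mode_Exchange: "ofs < 2 * nbits N \<Longrightarrow> slot_mode n N (r * round_len n N + ofs) = Exchange r (ofs div 2) (ofs mod 2)"
proof -
  assume a: "ofs < 2 * nbits N"
  then have "ofs < round_len n N" by (simp add: round_len_def)
  then show ?thesis using a by (simp add: slot_mode_def Let_def)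
qed

lemma slot_mode_Handshake: assumes "sg < 2 * nbits N + 1"
  shows "slot_mode n N (r * round_len n N + 2 * nbits N + sg * sweep_len n) = Handshake r sg"
proof -
  have "sg * sweep_len n < (2 * nbits N + 1) * sweep_len n" using assms by (intro mult_less_mono1) (simp_all add: sweep_len_def)
  then have lt: "2 * nbits N + sg * sweep_len n < round_len n N" by (simp add: round_len_def)
  have eq: "r * round_len n N + 2 * nbits N + sg * sweep_len n = r * round_len n N + (2 * nbits N + sg * sweep_len n)" by simp
  have "(r * round_len n N + 2 * nbits N + sg * sweep_len n) div round_len n N = r"
       "(r * round_len n N + 2 * nbits N + sg * sweep_len n) mod round_len n N = 2 * nbits N + sg * sweep_len n"
    unfolding eq using div_mod_offset[OF lt] by blast+
  moreover have "sweep_len n > 0" by (simp add: sweep_len_def)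
  ultimately show ?thesis by (simp add: slot_mode_def Let_def)
qed

lemma slot_mode_Sweep: assumes "sg < 2 * nbits N + 1" "w < 2 * n"
  shows "slot_mode n N (r * round_len n N + 2 * nbits N + sg * sweep_len n + Suc w) = Sweep r sg w"
proof -
  have "sg * sweep_len n + Suc w < (2 * nbits N + 1) * sweep_len n"
  proof -
    have "sg * sweep_len n + Suc w < sg * sweep_len n + sweep_len n" using assms by (simp add: sweep_len_def)
    also have "\<dots> = Suc sg * sweep_len n" by simp
    also have "\<dots> \<le> (2 * nbits N + 1) * sweep_len n" using assms(1) by (intro mult_le_mono1) simp
    finally show ?thesis .
  qed
  then have lt: "2 * nbits N + sg * sweep_len n + Suc w < round_len n N" by (simp add: round_len_def)
  have eq: "r * round_len n N + 2 * nbits N + sg * sweep_len n + Suc w = r * round_len n N + (2 * nbits N + sg * sweep_len n + Suc w)" by simp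
  have dm: "(r * round_len n N + 2 * nbits N + sg * sweep_len n + Suc w) div round_len n N = r"
       "(r * round_len n N + 2 * nbits N + sg * sweep_len n + Suc w) mod round_len n N = 2 * nbits N + sg * sweep_len n + Suc w"
    unfolding eq using div_mod_offset[OF lt] by blast+
  moreover have "Suc w < sweep_len n" using assms(2) by (simp add: sweep_len_def)
  then have "(sg * sweep_len n + Suc w) div sweep_len n = sg" "(sg * sweep_len n + Suc w) mod sweep_len n = Suc w"
    using div_mod_offset by blast+
  moreover have "\<not> 2 * nbits N + sg * sweep_len n + Suc w < 2 * nbits N" by simp
  moreover have "2 * nbits N + sg * sweep_len n + Suc w - 2 * nbits N = sg * sweep_len n + Suc w" by simp
  ultimately show ?thesis unfolding slot_mode_def Let_def dm by simp
qed

lemma commit_Exchange: "slot_mode n N t = Exchange r b p \<Longrightarrow> \<not> commit n N t" by (simp add: commit_def)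
lemma commit_Handshake: "slot_mode n N t = Handshake r sg \<Longrightarrow> \<not> commit n N t" by (simp add: commit_def)
lemma commit_Sweep: "slot_mode n N t = Sweep r sg w \<Longrightarrow> commit n N t \<longleftrightarrow> even sg \<and> w + 1 = 2 * n"
  by (simp add: commit_def)

lemma known_ball_mono: "k \<le> k' \<Longrightarrow> known_ball K k \<subseteq> known_ball K k'"
  by (induction rule: dec_induct) auto

lemma reach_ball: "(known_adj K)\<^sup>*\<^sup>* (group_name K) x \<Longrightarrow> \<exists>k. x \<in> known_ball K k"
proof (induction rule: rtranclp_induct)
  case base then show ?case using known_ball.simps(1) by blast
next
  case (step y z)
  then obtain k where "y \<in> known_ball K k" by blast
  then have "z \<in> known_ball K (Suc k)" using step by auto
  then show ?case by blast
qed

lemma level_in: "\<exists>k. x \<in> known_ball K k \<Longrightarrow> x \<in> known_ball K (level K x)"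
  unfolding level_def by (rule LeastI_ex)

lemma level_0: "\<exists>k. x \<in> known_ball K k \<Longrightarrow> level K x = 0 \<Longrightarrow> x = group_name K"
  using level_in by fastforce

lemma level_Suc:
  assumes ex: "\<exists>k. x \<in> known_ball K k" and l: "level K x = Suc k"
  shows "\<exists>p. known_adj K p x \<and> level K p = k \<and> (\<exists>k. p \<in> known_ball K k)"
proof -
  have x1: "x \<in> known_ball K (Suc k)" using level_in[OF ex] l by simp
  have x2: "x \<notin> known_ball K k"
  proof
    assume "x \<in> known_ball K k"
    then have "level K x \<le> k" unfolding level_def by (rule Least_le)
    then show False using l by simp
  qed
  obtain p where p: "p \<in> known_ball K k" "known_adj K p x" using x1 x2 by auto
  have pl: "level K p \<le> k" using p(1) unfolding level_def by (rule Least_le)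
  have "\<not> level K p < k"
  proof
    assume "level K p < k"
    have "p \<in> known_ball K (level K p)" using level_in p(1) by blast
    then have "x \<in> known_ball K (Suc (level K p))" using p(2) by auto
    moreover have "known_ball K (Suc (level K p)) \<subseteq> known_ball K k" using \<open>level K p < k\<close> by (intro known_ball_mono) simp
    ultimately show False using x2 by blast
  qed
  then show ?thesis using pl p by (intro exI[of _ p]) auto
qed

lemma known_adj_members: "known_adj K a b \<Longrightarrow> a \<in> members K \<and> b \<in> members K" by (simp add: known_adj_def)

lemma level_bound:
  assumes fin: "finite (members K)" and connected_parts: "\<forall>x\<in>members K. \<exists>k. x \<in> known_ball K k"
    and rt: "group_name K \<in> members K" and x: "x \<in> members K"
  shows "level K x < card (members K)"
proof -
  have ex: "\<forall>i. i \<le> level K x \<longrightarrow> (\<exists>y\<in>members K. level K y = i)"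
  proof (intro allI impI)
    fix i assume "i \<le> level K x"
    then obtain d where d: "level K x = i + d" using le_Suc_ex by blast
    have "\<forall>y\<in>members K. level K y = i + d \<longrightarrow> (\<exists>z\<in>members K. level K z = i)"
    proof (induction d)
      case 0 then show ?case by auto
    next
      case (Suc d)
      show ?case
      proof (intro ballI impI)
        fix y assume y: "y \<in> members K" "level K y = i + Suc d"
        then obtain p where p: "known_adj K p y" "level K p = i + d"
          using level_Suc[OF connected_parts[rule_format, OF y(1)]] by auto
        then show "\<exists>z\<in>members K. level K z = i" using Suc known_adj_members by blast
      qed
    qed
    then show "\<exists>y\<in>members K. level K y = i" using x d by blast
  qed
  have "{0..level K x} \<subseteq> level K ` members K" using ex by auto
  then have "card {0..level K x} \<le> card (level K ` members K)" using fin by (intro card_mono) auto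
  also have "\<dots> \<le> card (members K)" using fin by (rule card_image_le)
  finally show ?thesis by simp
qed


lemma card_insert_Suc: "card (insert x A) \<le> Suc (card A)"
  by (cases "finite A") (auto simp: card_insert_if)

lemma card_4_le: "card {a, b, c, d :: nat} \<le> 4"
  using card_length[of "[a, b, c, d]"] by simp

lemma sweep_act_card: "card {w. w < 2 * n \<and> sweep_act n w l \<noteq> None} \<le> 4"
proof -
  have "{w. w < 2 * n \<and> sweep_act n w l \<noteq> None} \<subseteq> {n - 1 - l, n - 2 - l, n + l, n + l - 1}"
    by (auto simp: sweep_act_def split: if_splits)
  then have "card {w. w < 2 * n \<and> sweep_act n w l \<noteq> None} \<le> card {n - 1 - l, n - 2 - l, n + l, n + l - 1}"
    by (intro card_mono) auto
  then show ?thesis using card_4_le by (rule le_trans)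
qed

lemma act_payload: "is_transmit (act q) \<Longrightarrow> payload (act q) = q"
  by (auto simp: act_def Let_def split: mode.splits if_splits option.splits bool.splits)

lemma newinfo_fin: "finite (snd (newinfo q M))"
proof (cases M)
  case None then show ?thesis by (simp add: newinfo_def Let_def)
next
  case (Some M')
  then show ?thesis by (simp add: newinfo_def Let_def split: mode.splits)
qed

definition merge_msg :: "'m st \<Rightarrow> 'm st set \<Rightarrow> 'm option" where
  "merge_msg q P = (if fst q \<noteq> None then fst q else if (\<exists>q'\<in>P. fst q' \<noteq> None) then fst (SOME q'. q' \<in> P \<and> fst q' \<noteq> None) else None)"

lemma newinfo_msg:
  assumes "\<forall>r b p. slot_mode (net_size (decode_aux (snd q))) (id_bound (decode_aux (snd q))) (clock (decode_aux (snd q))) \<noteq> Exchange r b p"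
  shows "fst (newinfo q (Some M)) = merge_msg q {q' \<in> set_mset M. accepts (decode_aux (snd q)) q'}"
  using assms by (cases "slot_mode (net_size (decode_aux (snd q))) (id_bound (decode_aux (snd q))) (clock (decode_aux (snd q)))")
    (simp_all add: newinfo_def merge_msg_def Let_def)

lemma merge_msg_val:
  assumes "fst q = None \<or> fst q = Some m" "\<forall>q'\<in>P. fst q' = None \<or> fst q' = Some m"
  shows "merge_msg q P = (if fst q = Some m \<or> (\<exists>q'\<in>P. fst q' = Some m) then Some m else None)"
proof -
  have "(\<exists>q'\<in>P. fst q' \<noteq> None) \<Longrightarrow> fst (SOME q'. q' \<in> P \<and> fst q' \<noteq> None) = Some m"
    using assms(2) by (metis (mono_tags, lifting) someI_ex)
  then show ?thesis using assms unfolding merge_msg_def by auto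
qed

section \<open>The cluster process\<close>

lemma rtranclp_sym:
  assumes "\<And>x y. R x y \<Longrightarrow> R y x" "R\<^sup>*\<^sup>* a b" shows "R\<^sup>*\<^sup>* b a"
  using assms(2) by (induction rule: rtranclp_induct) (auto intro: converse_rtranclp_into_rtranclp assms(1))

lemma fiber_count:
  assumes fin: "finite A" and fib: "\<forall>a\<in>A. \<exists>a'\<in>A. a' \<noteq> a \<and> f a' = f a"
  shows "2 * card (f ` A) \<le> card A"
proof -
  define B where "B b = {a\<in>A. f a = b}" for b
  have U: "(\<Union>b\<in>f ` A. B b) = A" by (auto simp: B_def)
  have "card (\<Union>b\<in>f ` A. B b) = (\<Sum>b\<in>f ` A. card (B b))"
    by (rule card_UN_disjoint) (use fin in \<open>auto simp: B_def\<close>)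
  moreover have "\<forall>b\<in>f ` A. 2 \<le> card (B b)"
  proof
    fix b assume "b \<in> f ` A"
    then obtain a where a: "a \<in> A" "f a = b" by blast
    then obtain a' where a': "a' \<in> A" "a' \<noteq> a" "f a' = f a" using fib by blast
    have "{a, a'} \<subseteq> B b" using a a' by (auto simp: B_def)
    moreover have "finite (B b)" using fin by (simp add: B_def)
    ultimately have "card {a, a'} \<le> card (B b)" by (rule card_mono[rotated])
    then show "2 \<le> card (B b)" using a'(2) by simp
  qed
  then have "of_nat (card (f ` A)) * 2 \<le> (\<Sum>b\<in>f ` A. card (B b))" by (intro sum_bounded_below) blast
  ultimately show ?thesis using U by simp
qed

definition is_partition :: "nat set \<Rightarrow> (nat \<Rightarrow> nat set) \<Rightarrow> bool" where
  "is_partition V g = (\<forall>v\<in>V. v \<in> g v \<and> g v \<subseteq> V \<and> (\<forall>y\<in>g v. g y = g v))"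

definition connected_parts :: "nat set \<Rightarrow> (nat \<Rightarrow> nat \<Rightarrow> bool) \<Rightarrow> (nat \<Rightarrow> nat set) \<Rightarrow> bool" where
  "connected_parts V E g = (\<forall>v\<in>V. \<forall>a\<in>g v. \<forall>b\<in>g v. (\<lambda>x y. E x y \<and> x \<in> g v \<and> y \<in> g v)\<^sup>*\<^sup>* a b)"

locale net =
  fixes V :: "nat set" and E :: "nat \<Rightarrow> nat \<Rightarrow> bool" and N :: nat
  assumes rn: "radio_network V E" and VN: "V \<subseteq> {1..N}" and two: "2 \<le> card V"
begin

lemma finV: "finite V" using rn by (simp add: radio_network_def)
lemma edge_in_V: "E x y \<Longrightarrow> x \<in> V \<and> y \<in> V" using rn by (simp add: radio_network_def)
lemma Esym: "E x y \<Longrightarrow> E y x" using rn by (simp add: radio_network_def)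
lemma Eirr: "\<not> E x x" using rn by (simp add: radio_network_def)
lemma Vconn: "x \<in> V \<Longrightarrow> y \<in> V \<Longrightarrow> E\<^sup>*\<^sup>* x y" using rn by (simp add: radio_network_def)
lemma Vne: "V \<noteq> {}" using two by auto
lemma N_pos: "1 \<le> N" using VN Vne by auto
lemma V_lt_pow: "x \<in> V \<Longrightarrow> x < 2 ^ nbits N"
  using VN nbits_gt[of N] by force
lemma nbits_N_pos: "1 \<le> nbits N" using nbits_pos N_pos by simp

lemma cross: "E\<^sup>*\<^sup>* a b \<Longrightarrow> a \<in> S \<Longrightarrow> b \<notin> S \<Longrightarrow> \<exists>x y. x \<in> S \<and> y \<notin> S \<and> E x y"
  by (induction rule: rtranclp_induct) auto

lemma has_nbr: assumes "x \<in> V" shows "\<exists>y. E x y"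
proof -
  have "\<exists>y\<in>V. y \<noteq> x"
  proof (rule ccontr)
    assume "\<not> ?thesis"
    then have "V \<subseteq> {x}" by auto
    then have "card V \<le> 1" using card_mono[of "{x}" V] by simp
    then show False using two by simp
  qed
  then obtain y where "y \<in> V" "y \<noteq> x" by auto
  then have "E\<^sup>*\<^sup>* x y" using Vconn assms by simp
  from cross[OF this, of "{x}"] \<open>y \<noteq> x\<close> show ?thesis by auto
qed

text \<open>The process the algorithm implements. \<open>rounds r\<close> consists of the clusters after \<open>r\<close>
  rounds and of the facts each vertex has contributed; parts are merged with the same knowledge
  functions the vertices evaluate, so that the execution can be matched with it step by step.\<close>

definition nbr_facts :: "(nat \<Rightarrow> nat set) \<Rightarrow> nat \<Rightarrow> nat \<Rightarrow> fact set" where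
  "nbr_facts g r x = {Nb r x (Min (g x)) y (Min (g y)) | y. E x y}"

definition pooled :: "(nat \<Rightarrow> fact set) \<Rightarrow> nat set \<Rightarrow> fact set" where
  "pooled f S = (\<Union>x\<in>S. f x)"

definition merge_step :: "(nat \<Rightarrow> fact set) \<Rightarrow> nat \<Rightarrow> nat \<Rightarrow> (nat \<Rightarrow> nat set) \<Rightarrow> nat \<Rightarrow> nat set" where
  "merge_step f r j g v = (let is_leaf = (\<lambda>u. known_is_leaf (pooled f (g u)) r j); leaf_edge = (\<lambda>u. known_leaf_edge (pooled f (g u)) r j);
     hub = (if is_leaf v then g (snd (leaf_edge v)) else g v) in hub \<union> (\<Union>{g u | u. u \<in> V \<and> is_leaf u \<and> snd (leaf_edge u) \<in> hub}))"

primrec merge_steps :: "(nat \<Rightarrow> fact set) \<Rightarrow> nat \<Rightarrow> (nat \<Rightarrow> nat set) \<Rightarrow> nat \<Rightarrow> nat \<Rightarrow> nat set" where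
  "merge_steps f r g 0 = g"
| "merge_steps f r g (Suc j) = merge_step f r j (merge_steps f r g j)"

primrec rounds :: "nat \<Rightarrow> (nat \<Rightarrow> nat set) \<times> (nat \<Rightarrow> fact set)" where
  "rounds 0 = ((\<lambda>x. {x}), (\<lambda>x. {Me x}))"
| "rounds (Suc r) = (let g = fst (rounds r); f' = (\<lambda>x. snd (rounds r) x \<union> nbr_facts g r x) in (merge_steps f' r g (nbits N), f'))"

definition cluster :: "nat \<Rightarrow> nat \<Rightarrow> nat set" where "cluster r = fst (rounds r)"
definition facts :: "nat \<Rightarrow> nat \<Rightarrow> fact set" where "facts r = snd (rounds r)"

lemma cluster_0: "cluster 0 x = {x}" by (simp add: cluster_def)
lemma facts_0: "facts 0 x = {Me x}" by (simp add: facts_def)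
lemma facts_Suc: "facts (Suc r) x = facts r x \<union> nbr_facts (cluster r) r x" by (simp add: facts_def cluster_def Let_def)
lemma cluster_Suc: "cluster (Suc r) = merge_steps (facts (Suc r)) r (cluster r) (nbits N)"
  by (simp add: facts_def cluster_def Let_def)

lemma facts_Me: "Me y \<in> facts r x \<longleftrightarrow> y = x"
  by (induction r) (auto simp: facts_0 facts_Suc nbr_facts_def)

lemma facts_Nb: "Nb r' x' c y b \<in> facts r x \<Longrightarrow> r' < r \<and> x' = x \<and> c = Min (cluster r' x) \<and> b = Min (cluster r' y) \<and> E x y"
  by (induction r) (auto simp: facts_0 facts_Suc nbr_facts_def)

lemma facts_Nb_in: "r' < r \<Longrightarrow> E x y \<Longrightarrow> Nb r' x (Min (cluster r' x)) y (Min (cluster r' y)) \<in> facts r x"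
proof (induction r)
  case 0 then show ?case by simp
next
  case (Suc r) then show ?case by (cases "r' = r") (auto simp: facts_Suc nbr_facts_def)
qed

lemma members_pooled: "members (pooled (facts r) S) = S"
  by (auto simp: members_def pooled_def facts_Me)

lemma group_name_pooled: "group_name (pooled (facts r) S) = Min S"
  by (simp add: group_name_def members_pooled)

lemma known_adj_pooled: "known_adj (pooled (facts r) S) a b \<longleftrightarrow> a \<in> S \<and> b \<in> S \<and> 0 < r \<and> E a b"
proof
  assume "known_adj (pooled (facts r) S) a b"
  then have "a \<in> S" "b \<in> S" "\<exists>r' aa bb. Nb r' a aa b bb \<in> pooled (facts r) S \<or> Nb r' b aa a bb \<in> pooled (facts r) S"
    unfolding known_adj_def members_pooled by auto
  then show "a \<in> S \<and> b \<in> S \<and> 0 < r \<and> E a b"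
    unfolding pooled_def using facts_Nb Esym by fastforce
next
  assume a: "a \<in> S \<and> b \<in> S \<and> 0 < r \<and> E a b"
  then have "Nb 0 a (Min (cluster 0 a)) b (Min (cluster 0 b)) \<in> pooled (facts r) S"
    unfolding pooled_def using facts_Nb_in[of 0 r a b] by auto
  then show "known_adj (pooled (facts r) S) a b" unfolding known_adj_def members_pooled using a by blast
qed



lemma is_partition_fin: "is_partition V g \<Longrightarrow> v \<in> V \<Longrightarrow> finite (g v)"
  unfolding is_partition_def by (meson finV finite_subset)

lemma is_partition_Min_in: "is_partition V g \<Longrightarrow> v \<in> V \<Longrightarrow> Min (g v) \<in> g v"
proof -
  assume a: "is_partition V g" "v \<in> V"
  then have "v \<in> g v" unfolding is_partition_def by blast
  then show ?thesis using is_partition_fin[OF a] Min_in by blast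
qed

lemma is_partition_same: "is_partition V g \<Longrightarrow> v \<in> V \<Longrightarrow> y \<in> g v \<Longrightarrow> g y = g v \<and> y \<in> V"
  unfolding is_partition_def by blast

lemma is_partition_Min_cluster: "is_partition V g \<Longrightarrow> v \<in> V \<Longrightarrow> g (Min (g v)) = g v"
  using is_partition_Min_in is_partition_same by blast

lemma is_partition_name_inj: "is_partition V g \<Longrightarrow> x \<in> V \<Longrightarrow> y \<in> V \<Longrightarrow> Min (g x) = Min (g y) \<Longrightarrow> g x = g y"
  using is_partition_Min_cluster by metis

lemma is_partition_Min_le: "is_partition V g \<Longrightarrow> v \<in> V \<Longrightarrow> y \<in> g v \<Longrightarrow> Min (g v) \<le> y"
  using is_partition_fin by simp

definition cname :: "nat \<Rightarrow> nat \<Rightarrow> nat" where "cname r x = Min (cluster r x)"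
definition out_names :: "nat \<Rightarrow> nat \<Rightarrow> nat set" where
  "out_names r x = {cname r y | x' y. x' \<in> cluster r x \<and> E x' y \<and> cname r y \<noteq> cname r x}"
definition target :: "nat \<Rightarrow> nat \<Rightarrow> nat option" where
  "target r x = (if out_names r x \<noteq> {} \<and> Min (out_names r x) < cname r x then Some (Min (out_names r x)) else None)"

lemma out_names_fin: "finite (out_names r x)"
proof -
  have "out_names r x \<subseteq> cname r ` V" unfolding out_names_def using edge_in_V by blast
  then show ?thesis using finV finite_subset by blast
qed

lemma target_SomeD: "target r x = Some t \<Longrightarrow> t < cname r x \<and> (\<exists>x' y. x' \<in> cluster r x \<and> E x' y \<and> cname r y = t)"
proof -
  assume a: "target r x = Some t"
  then have ne: "out_names r x \<noteq> {}" and t: "t = Min (out_names r x)" "t < cname r x"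
    unfolding target_def by (auto split: if_splits)
  then have "t \<in> out_names r x" using out_names_fin Min_in by blast
  then show ?thesis using t unfolding out_names_def by blast
qed

lemma target_exists:
  assumes "x' \<in> cluster r x" "E x' y" "cname r y < cname r x"
  shows "\<exists>t. target r x = Some t \<and> t \<le> cname r y"
proof -
  have "cname r y \<in> out_names r x" unfolding out_names_def using assms by fastforce
  then have "Min (out_names r x) \<le> cname r y" using out_names_fin by simp
  then show ?thesis unfolding target_def using assms \<open>cname r y \<in> out_names r x\<close> by auto
qed

text \<open>Once \<open>j = nbits N\<close> no target can differ from a
  name first at a bit \<open>\<ge> j\<close>, so every cluster's target lies in its new part.\<close>

definition merge_inv :: "nat \<Rightarrow> nat \<Rightarrow> (nat \<Rightarrow> nat set) \<Rightarrow> bool" where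
  "merge_inv r j g = (is_partition V g \<and> connected_parts V E g \<and> (\<forall>v\<in>V. cluster r v \<subseteq> g v) \<and>
     (\<forall>x\<in>V. cname r x \<noteq> Min (g x) \<longrightarrow> (\<exists>t. target r x = Some t \<and> t \<in> cname r ` g x \<and> top_diff_bit (cname r x) t < j)) \<and>
     (\<forall>x\<in>V. \<forall>y\<in>g x. cname r x div 2 ^ j = cname r y div 2 ^ j) \<and>
     (\<forall>x\<in>V. cname r x = Min (g x) \<longrightarrow> (\<forall>t. target r x = Some t \<longrightarrow> j \<le> top_diff_bit (cname r x) t)))"

context
  fixes r :: nat
  assumes Pp: "is_partition V (cluster r)" and Pc: "connected_parts V E (cluster r)"
begin

lemma cname_eq_cluster: "x \<in> V \<Longrightarrow> x' \<in> V \<Longrightarrow> cname r x = cname r x' \<Longrightarrow> cluster r x = cluster r x'"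
  unfolding cname_def by (rule is_partition_name_inj[OF Pp])

lemma target_cong: "x \<in> V \<Longrightarrow> x' \<in> V \<Longrightarrow> cname r x = cname r x' \<Longrightarrow> target r x = target r x'"
proof -
  assume a: "x \<in> V" "x' \<in> V" "cname r x = cname r x'"
  then have "cluster r x = cluster r x'" by (rule cname_eq_cluster)
  then have "out_names r x = out_names r x'" unfolding out_names_def using a(3) by simp
  then show ?thesis unfolding target_def using a(3) by simp
qed

lemma cname_in: "x \<in> V \<Longrightarrow> cname r x \<in> cluster r x"
  unfolding cname_def using is_partition_Min_in[OF Pp] .

lemma cname_V: "x \<in> V \<Longrightarrow> cname r x \<in> V"
  using cname_in is_partition_same[OF Pp] by blast

context
  fixes g assumes gp: "is_partition V g" and gc: "\<forall>v\<in>V. cluster r v \<subseteq> g v"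
begin

lemma cname_Min: "v \<in> V \<Longrightarrow> cname r (Min (g v)) = Min (g v)"
proof -
  assume v: "v \<in> V"
  define m where "m = Min (g v)"
  have m1: "m \<in> g v" using is_partition_Min_in[OF gp v] by (simp add: m_def)
  have m: "m \<in> g v" "m \<in> V" using m1 is_partition_same[OF gp v m1] by auto
  have "cluster r m \<subseteq> g m" using gc m by auto
  also have "g m = g v" using is_partition_same[OF gp v m(1)] by simp
  finally have sub: "cluster r m \<subseteq> g v" .
  have "m \<in> cluster r m" using Pp m(2) unfolding is_partition_def by blast
  then have "cname r m \<le> m" unfolding cname_def using is_partition_fin[OF Pp m(2)] by simp
  moreover have "cname r m \<in> g v" using cname_in[OF m(2)] sub by blast
  then have "m \<le> cname r m" unfolding m_def by (rule is_partition_Min_le[OF gp v])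
  ultimately show ?thesis by (simp add: m_def)
qed

lemma cname_ge: "v \<in> V \<Longrightarrow> x \<in> g v \<Longrightarrow> Min (g v) \<le> cname r x"
proof -
  assume v: "v \<in> V" and x: "x \<in> g v"
  have xV: "x \<in> V" using is_partition_same[OF gp v x] by simp
  have "cname r x \<in> g x" using cname_in[OF xV] gc xV by auto
  then have "cname r x \<in> g v" using is_partition_same[OF gp v x] by simp
  then show ?thesis using is_partition_Min_le[OF gp v] by simp
qed

lemma in_cluster_iff: "x \<in> g v \<Longrightarrow> v \<in> V \<Longrightarrow> x' \<in> g v \<and> cname r x' = cname r x \<longleftrightarrow> x' \<in> cluster r x"
proof -
  assume x: "x \<in> g v" and v: "v \<in> V"
  have xV: "x \<in> V" using is_partition_same[OF gp v x] by simp
  show ?thesis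
  proof
    assume a: "x' \<in> g v \<and> cname r x' = cname r x"
    then have "x' \<in> V" using is_partition_same[OF gp v, of x'] by blast
    then have "cluster r x' = cluster r x" using cname_eq_cluster[OF _ xV] a by blast
    moreover have "x' \<in> cluster r x'" using Pp \<open>x' \<in> V\<close> unfolding is_partition_def by blast
    ultimately show "x' \<in> cluster r x" by simp
  next
    assume a: "x' \<in> cluster r x"
    then have "cluster r x' = cluster r x" "x' \<in> V" using is_partition_same[OF Pp xV a] by auto
    moreover have "x' \<in> g x" using gc xV a by auto
    moreover have "g x = g v" using is_partition_same[OF gp v x] by simp
    ultimately show "x' \<in> g v \<and> cname r x' = cname r x" by (simp add: cname_def)
  qed
qed

abbreviation next_pool :: "nat \<Rightarrow> fact set" where "next_pool v \<equiv> pooled (facts (Suc r)) (g v)"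

lemma Nb_next_pool: "v \<in> V \<Longrightarrow> Nb r x c y b \<in> next_pool v \<longleftrightarrow> x \<in> g v \<and> E x y \<and> c = cname r x \<and> b = cname r y"
proof
  assume "Nb r x c y b \<in> next_pool v"
  then show "x \<in> g v \<and> E x y \<and> c = cname r x \<and> b = cname r y"
    unfolding pooled_def cname_def using facts_Nb by fastforce
next
  assume "x \<in> g v \<and> E x y \<and> c = cname r x \<and> b = cname r y"
  then show "Nb r x c y b \<in> next_pool v" unfolding pooled_def cname_def using facts_Nb_in[of r "Suc r" x y] by auto
qed

lemma known_names_next_pool: "v \<in> V \<Longrightarrow> known_names (next_pool v) r = cname r ` g v"
proof -
  assume v: "v \<in> V"
  have "c \<in> known_names (next_pool v) r \<longleftrightarrow> c \<in> cname r ` g v" for c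
  proof
    assume "c \<in> known_names (next_pool v) r"
    then obtain x y b where "Nb r x c y b \<in> next_pool v" unfolding known_names_def by blast
    then show "c \<in> cname r ` g v" using Nb_next_pool[OF v] by blast
  next
    assume "c \<in> cname r ` g v"
    then obtain x where x: "x \<in> g v" "c = cname r x" by blast
    then have "x \<in> V" using is_partition_same[OF gp v] by blast
    then obtain y where "E x y" using has_nbr by blast
    then have "Nb r x c y (cname r y) \<in> next_pool v" using Nb_next_pool[OF v] x by blast
    then show "c \<in> known_names (next_pool v) r" unfolding known_names_def by blast
  qed
  then show ?thesis by blast
qed

lemma known_out_next_pool: "v \<in> V \<Longrightarrow> x \<in> g v \<Longrightarrow> known_out (next_pool v) r (cname r x) = out_names r x"
proof -
  assume v: "v \<in> V" and x: "x \<in> g v"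
  have "b \<in> known_out (next_pool v) r (cname r x) \<longleftrightarrow> b \<in> out_names r x" for b
  proof -
    have "b \<in> known_out (next_pool v) r (cname r x) \<longleftrightarrow> (\<exists>x' y. x' \<in> g v \<and> cname r x' = cname r x \<and> E x' y \<and> b = cname r y \<and> b \<noteq> cname r x)"
      unfolding known_out_def mem_Collect_eq Nb_next_pool[OF v] by (metis (no_types, lifting))
    also have "\<dots> \<longleftrightarrow> (\<exists>x' y. x' \<in> cluster r x \<and> E x' y \<and> b = cname r y \<and> b \<noteq> cname r x)"
      using in_cluster_iff[OF x v] by blast
    also have "\<dots> \<longleftrightarrow> b \<in> out_names r x" unfolding out_names_def by blast
    finally show ?thesis .
  qed
  then show ?thesis by blast
qed

lemma known_target_next_pool: "v \<in> V \<Longrightarrow> x \<in> g v \<Longrightarrow> known_target (next_pool v) r (cname r x) = target r x"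
  unfolding known_target_def target_def using known_out_next_pool by simp

lemma Min_part_in: "v \<in> V \<Longrightarrow> Min (g v) \<in> g v \<and> Min (g v) \<in> V"
  using is_partition_Min_in[OF gp] is_partition_same[OF gp] by blast

lemma known_leaves_next_pool:
  assumes v: "v \<in> V"
    and I2: "\<forall>x\<in>V. cname r x \<noteq> Min (g x) \<longrightarrow> (\<exists>t. target r x = Some t \<and> t \<in> cname r ` g x \<and> top_diff_bit (cname r x) t < j)"
  shows "known_leaves (next_pool v) r j = (if \<exists>t. target r (Min (g v)) = Some t \<and> top_diff_bit (Min (g v)) t = j then {Min (g v)} else {})"
proof -
  define m where "m = Min (g v)"
  have m: "m \<in> g v" "m \<in> V" "cname r m = m" using Min_part_in[OF v] cname_Min[OF v] by (auto simp: m_def)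
  have "c \<in> known_leaves (next_pool v) r j \<longleftrightarrow> c = m \<and> (\<exists>t. target r m = Some t \<and> top_diff_bit m t = j)" for c
  proof
    assume "c \<in> known_leaves (next_pool v) r j"
    then obtain t where c: "c \<in> cname r ` g v" "known_target (next_pool v) r c = Some t" "t \<notin> cname r ` g v" "top_diff_bit c t = j"
      unfolding known_leaves_def known_names_next_pool[OF v] by blast
    then obtain x where x: "x \<in> g v" "c = cname r x" by blast
    have xV: "x \<in> V" "g x = g v" using is_partition_same[OF gp v x(1)] by auto
    have tx: "target r x = Some t" using c(2) known_target_next_pool[OF v x(1)] x(2) by simp
    have "cname r x = Min (g x)"
    proof (rule ccontr)
      assume "cname r x \<noteq> Min (g x)"
      then obtain t' where "target r x = Some t'" "t' \<in> cname r ` g x" using I2 xV(1) by blast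
      then show False using tx c(3) xV(2) by simp
    qed
    then have "c = m" using x(2) xV(2) by (simp add: m_def)
    moreover have "target r m = Some t" using target_cong[OF xV(1) m(2)] tx \<open>c = m\<close> x(2) m(3) by simp
    ultimately show "c = m \<and> (\<exists>t. target r m = Some t \<and> top_diff_bit m t = j)" using c(4) by blast
  next
    assume a: "c = m \<and> (\<exists>t. target r m = Some t \<and> top_diff_bit m t = j)"
    then obtain t where t: "target r m = Some t" "top_diff_bit m t = j" by blast
    have "t < m" using target_SomeD[OF t(1)] m(3) by simp
    have "t \<notin> cname r ` g v"
    proof
      assume "t \<in> cname r ` g v"
      then obtain y where "y \<in> g v" "t = cname r y" by blast
      then have "m \<le> t" using cname_ge[OF v] by (simp add: m_def)
      then show False using \<open>t < m\<close> by simp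
    qed
    moreover have "known_target (next_pool v) r c = Some t" using known_target_next_pool[OF v m(1)] m(3) a t(1) by simp
    moreover have "c \<in> cname r ` g v" using m a by force
    ultimately show "c \<in> known_leaves (next_pool v) r j" unfolding known_leaves_def known_names_next_pool[OF v] using a t(2) by blast
  qed
  then show ?thesis by (auto simp: m_def)
qed

lemma leaf_edge_next_pool:
  assumes v: "v \<in> V" and t: "target r (Min (g v)) = Some t"
    and lc: "known_leaves (next_pool v) r j = {Min (g v)}"
  shows "fst (known_leaf_edge (next_pool v) r j) \<in> g v \<and> E (fst (known_leaf_edge (next_pool v) r j)) (snd (known_leaf_edge (next_pool v) r j))
     \<and> cname r (snd (known_leaf_edge (next_pool v) r j)) = t \<and> cname r (fst (known_leaf_edge (next_pool v) r j)) = Min (g v)"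
proof -
  define c where "c = Min (g v)"
  have cm: "c \<in> g v" "c \<in> V" "cname r c = c" using Min_part_in[OF v] cname_Min[OF v] by (auto simp: c_def)
  have tK: "known_target (next_pool v) r c = Some t" using known_target_next_pool[OF v cm(1)] cm(3) t by (simp add: c_def)
  define xs where "xs = {x. \<exists>y. Nb r x c y t \<in> next_pool v}"
  define x0 where "x0 = Min xs"
  define ys where "ys = {y. Nb r x0 c y t \<in> next_pool v}"
  define y0 where "y0 = Min ys"
  have leaf_edge: "known_leaf_edge (next_pool v) r j = (x0, y0)"
    unfolding known_leaf_edge_def Let_def lc using tK by (simp add: c_def[symmetric] x0_def xs_def y0_def ys_def)
  obtain x' y where xy: "x' \<in> cluster r c" "E x' y" "cname r y = t" using target_SomeD[OF t] by (auto simp: c_def)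
  have x'V: "x' \<in> V" using xy(2) edge_in_V by blast
  have "x' \<in> g v \<and> cname r x' = cname r c" using in_cluster_iff[OF cm(1) v] xy(1) by blast
  then have "Nb r x' c y t \<in> next_pool v" using Nb_next_pool[OF v] xy cm(3) by simp
  then have "x' \<in> xs" by (auto simp: xs_def)
  moreover have "xs \<subseteq> g v" using Nb_next_pool[OF v] by (auto simp: xs_def)
  moreover have "finite (g v)" using is_partition_fin[OF gp v] .
  ultimately have "finite xs" "xs \<noteq> {}" using finite_subset by blast+
  then have "x0 \<in> xs" unfolding x0_def by (rule Min_in)
  then obtain y1 where y1: "Nb r x0 c y1 t \<in> next_pool v" by (auto simp: xs_def)
  then have "y1 \<in> ys" by (simp add: ys_def)
  moreover have "ys \<subseteq> V" using Nb_next_pool[OF v] edge_in_V by (auto simp: ys_def)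
  ultimately have "finite ys" "ys \<noteq> {}" using finite_subset finV by blast+
  then have "y0 \<in> ys" unfolding y0_def by (rule Min_in)
  then have "Nb r x0 c y0 t \<in> next_pool v" by (simp add: ys_def)
  then have "x0 \<in> g v \<and> E x0 y0 \<and> c = cname r x0 \<and> t = cname r y0" using Nb_next_pool[OF v] by blast
  then show ?thesis using leaf_edge by (simp add: c_def)
qed

end

end


context
  fixes r :: nat
  assumes Pp: "is_partition V (cluster r)" and Pc: "connected_parts V E (cluster r)"
begin

context
  fixes g j assumes inv: "merge_inv r j g"
begin

lemma inv_partition: "is_partition V g" using inv by (simp add: merge_inv_def)
lemma inv_self: "v \<in> V \<Longrightarrow> v \<in> g v" using inv_partition unfolding is_partition_def by blast
lemma inv_connected: "connected_parts V E g" using inv by (simp add: merge_inv_def)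
lemma inv_coarse: "\<forall>v\<in>V. cluster r v \<subseteq> g v" using inv by (simp add: merge_inv_def)
lemma inv_merged_target: "\<forall>x\<in>V. cname r x \<noteq> Min (g x) \<longrightarrow> (\<exists>t. target r x = Some t \<and> t \<in> cname r ` g x \<and> top_diff_bit (cname r x) t < j)"
  using inv by (simp add: merge_inv_def)
lemma inv_prefix: "\<forall>x\<in>V. \<forall>y\<in>g x. cname r x div 2 ^ j = cname r y div 2 ^ j"
  using inv by (simp add: merge_inv_def)
lemma inv_root_target: "\<forall>x\<in>V. cname r x = Min (g x) \<longrightarrow> (\<forall>t. target r x = Some t \<longrightarrow> j \<le> top_diff_bit (cname r x) t)"
  using inv by (simp add: merge_inv_def)

definition is_leaf :: "nat \<Rightarrow> bool" where "is_leaf u = known_is_leaf (pooled (facts (Suc r)) (g u)) r j"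
definition leaf_edge :: "nat \<Rightarrow> nat \<times> nat" where "leaf_edge u = known_leaf_edge (pooled (facts (Suc r)) (g u)) r j"

lemmas known_leaves' = known_leaves_next_pool[OF Pp Pc inv_partition inv_coarse]
lemmas leaf_edge' = leaf_edge_next_pool[OF Pp Pc inv_partition inv_coarse]
lemmas cname_Min' = cname_Min[OF Pp Pc inv_partition inv_coarse]
lemmas cname_ge' = cname_ge[OF Pp Pc inv_partition inv_coarse]
lemmas Min_part_in' = Min_part_in[OF Pp Pc inv_partition inv_coarse]
lemmas target_cong' = target_cong[OF Pp Pc]

lemma is_leaf_iff: "v \<in> V \<Longrightarrow> is_leaf v \<longleftrightarrow> (\<exists>t. target r (Min (g v)) = Some t \<and> top_diff_bit (Min (g v)) t = j)"
  unfolding is_leaf_def known_is_leaf_def using known_leaves'[OF _ inv_merged_target] by simp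

lemma leaf_edge_facts:
  assumes v: "v \<in> V" and l: "is_leaf v"
  shows "\<exists>t. target r (Min (g v)) = Some t \<and> top_diff_bit (Min (g v)) t = j \<and> t < Min (g v) \<and>
     fst (leaf_edge v) \<in> g v \<and> E (fst (leaf_edge v)) (snd (leaf_edge v)) \<and> cname r (snd (leaf_edge v)) = t \<and> snd (leaf_edge v) \<in> V \<and> snd (leaf_edge v) \<notin> g v"
proof -
  obtain t where t: "target r (Min (g v)) = Some t" "top_diff_bit (Min (g v)) t = j" using is_leaf_iff[OF v] l by blast
  have lc: "known_leaves (pooled (facts (Suc r)) (g v)) r j = {Min (g v)}" using known_leaves'[OF v inv_merged_target] t by auto
  have e: "fst (leaf_edge v) \<in> g v" "E (fst (leaf_edge v)) (snd (leaf_edge v))" "cname r (snd (leaf_edge v)) = t"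
    using leaf_edge'[OF v t(1) lc] by (auto simp: leaf_edge_def)
  have tl: "t < Min (g v)" using target_SomeD[OF t(1)] cname_Min'[OF v] by simp
  have "snd (leaf_edge v) \<in> V" using e(2) edge_in_V by blast
  moreover have "snd (leaf_edge v) \<notin> g v"
  proof
    assume "snd (leaf_edge v) \<in> g v"
    then have "Min (g v) \<le> t" using cname_ge'[OF v] e(3) by force
    then show False using tl by simp
  qed
  ultimately show ?thesis using t e tl by blast
qed

lemma cluster_const: "v \<in> V \<Longrightarrow> y \<in> g v \<Longrightarrow> is_leaf y = is_leaf v \<and> leaf_edge y = leaf_edge v \<and> y \<in> V \<and> g y = g v"
  using is_partition_same[OF inv_partition, of v y] by (simp add: is_leaf_def leaf_edge_def)

lemma center_nonleaf:
  assumes v: "v \<in> V" and l: "is_leaf v" shows "\<not> is_leaf (snd (leaf_edge v))"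
proof
  define y0 where "y0 = snd (leaf_edge v)"
  assume ly: "is_leaf y0"
  obtain t where t: "target r (Min (g v)) = Some t" "top_diff_bit (Min (g v)) t = j" "t < Min (g v)"
    "cname r y0 = t" "y0 \<in> V" using leaf_edge_facts[OF v l] by (auto simp: y0_def)
  have ev: "even (t div 2 ^ j)" using top_diff_bit_parity(2)[OF t(3)] t(2) by simp
  obtain t' where t': "target r (Min (g y0)) = Some t'" "top_diff_bit (Min (g y0)) t' = j" "t' < Min (g y0)"
    using leaf_edge_facts[OF t(5) ly] by blast
  have od: "odd (Min (g y0) div 2 ^ j)" using top_diff_bit_parity(1)[OF t'(3)] t'(2) by simp
  have "cname r y0 div 2 ^ j = cname r (Min (g y0)) div 2 ^ j" using inv_prefix t(5) Min_part_in'[OF t(5)] by blast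
  then have "t div 2 ^ j = Min (g y0) div 2 ^ j" using cname_Min'[OF t(5)] t(4) by simp
  then show False using ev od by simp
qed

definition hub :: "nat \<Rightarrow> nat set" where "hub v = (if is_leaf v then g (snd (leaf_edge v)) else g v)"

lemma hub_cluster: "v \<in> V \<Longrightarrow> \<exists>h\<in>V. hub v = g h \<and> \<not> is_leaf h"
  using leaf_edge_facts center_nonleaf unfolding hub_def by (cases "is_leaf v") auto

abbreviation g' :: "nat \<Rightarrow> nat set" where "g' \<equiv> merge_step (facts (Suc r)) r j g"

lemma merge_step_eq: "g' v = hub v \<union> \<Union>{g u | u. u \<in> V \<and> is_leaf u \<and> snd (leaf_edge u) \<in> hub v}"
  unfolding merge_step_def hub_def is_leaf_def leaf_edge_def Let_def by simp

lemma g'_cases: "y \<in> g' v \<Longrightarrow> y \<in> hub v \<or> (\<exists>u\<in>V. is_leaf u \<and> snd (leaf_edge u) \<in> hub v \<and> y \<in> g u)"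
  unfolding merge_step_eq by blast

lemma hub_same: assumes v: "v \<in> V" and y: "y \<in> g' v" shows "hub y = hub v \<and> y \<in> V"
proof -
  obtain h where h: "h \<in> V" "hub v = g h" "\<not> is_leaf h" using hub_cluster[OF v] by blast
  from g'_cases[OF y] show ?thesis
  proof
    assume "y \<in> hub v"
    then have "y \<in> g h" using h by simp
    then have "is_leaf y = is_leaf h" "g y = g h" "y \<in> V" using cluster_const[OF h(1)] by auto
    then show ?thesis using h by (simp add: hub_def)
  next
    assume "\<exists>u\<in>V. is_leaf u \<and> snd (leaf_edge u) \<in> hub v \<and> y \<in> g u"
    then obtain u where u: "u \<in> V" "is_leaf u" "snd (leaf_edge u) \<in> hub v" "y \<in> g u" by blast
    have yc: "is_leaf y = is_leaf u" "leaf_edge y = leaf_edge u" "y \<in> V" using cluster_const[OF u(1) u(4)] by auto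
    have "snd (leaf_edge u) \<in> g h" using u(3) h by simp
    then have "g (snd (leaf_edge u)) = g h" using cluster_const[OF h(1)] by blast
    then have "hub y = g h" using yc u(2) by (simp add: hub_def)
    then show ?thesis using h yc by simp
  qed
qed

lemma g'_same: "v \<in> V \<Longrightarrow> y \<in> g' v \<Longrightarrow> g' y = g' v \<and> y \<in> V"
proof -
  assume a: "v \<in> V" "y \<in> g' v"
  have "hub y = hub v" "y \<in> V" using hub_same[OF a] by auto
  then show ?thesis unfolding merge_step_eq by simp
qed

lemma g_sub_g': assumes v: "v \<in> V" shows "g v \<subseteq> g' v"
proof (cases "is_leaf v")
  case True
  have "snd (leaf_edge v) \<in> V" using leaf_edge_facts[OF v True] by blast
  then have "snd (leaf_edge v) \<in> g (snd (leaf_edge v))" using inv_partition unfolding is_partition_def by blast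
  then have "snd (leaf_edge v) \<in> hub v" using True unfolding hub_def by simp
  then show ?thesis unfolding merge_step_eq using v True by blast
next
  case False then show ?thesis unfolding merge_step_eq hub_def by auto
qed

lemma hub_sub_g': "hub v \<subseteq> g' v" unfolding merge_step_eq by blast

lemma v_in_g': "v \<in> V \<Longrightarrow> v \<in> g' v"
  using g_sub_g' inv_partition unfolding is_partition_def by blast

lemma Min_g': assumes v: "v \<in> V" shows "Min (g' v) = Min (hub v)"
proof -
  obtain h where h: "h \<in> V" "hub v = g h" "\<not> is_leaf h" using hub_cluster[OF v] by blast
  have fin: "finite (g' v)" using g'_same[OF v] finV by (meson finite_subset subsetI)
  have mh: "Min (g h) \<in> g' v" using Min_part_in'[OF h(1)] h(2) hub_sub_g' by blast
  have lb: "Min (g h) \<le> z" if z: "z \<in> g' v" for z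
  proof -
    from g'_cases[OF z] show ?thesis
    proof
      assume "z \<in> hub v" then show ?thesis using h is_partition_Min_le[OF inv_partition h(1)] by simp
    next
      assume "\<exists>u\<in>V. is_leaf u \<and> snd (leaf_edge u) \<in> hub v \<and> z \<in> g u"
      then obtain u where u: "u \<in> V" "is_leaf u" "snd (leaf_edge u) \<in> hub v" "z \<in> g u" by blast
      obtain t where t: "t < Min (g u)" "cname r (snd (leaf_edge u)) = t" using leaf_edge_facts[OF u(1) u(2)] by blast
      have "Min (g h) \<le> t" using cname_ge'[OF h(1)] u(3) h(2) t(2) by force
      moreover have "Min (g u) \<le> z" using is_partition_Min_le[OF inv_partition u(1) u(4)] .
      ultimately show ?thesis using t by simp
    qed
  qed
  have "Min (g' v) = Min (g h)"
    using fin mh lb by (meson Min_eqI)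
  then show ?thesis using h by simp
qed

lemma is_partition_g': "is_partition V g'"
  unfolding is_partition_def using v_in_g' g'_same by blast

lemma coarse_g': "\<forall>v\<in>V. cluster r v \<subseteq> g' v"
  using inv_coarse g_sub_g' by blast

lemma connected_parts_g': "connected_parts V E g'"
  unfolding connected_parts_def
proof (intro ballI)
  fix v a b assume v: "v \<in> V" and a: "a \<in> g' v" and b: "b \<in> g' v"
  define R where "R = (\<lambda>x y. E x y \<and> x \<in> g' v \<and> y \<in> g' v)"
  have Rs: "R x y \<Longrightarrow> R y x" for x y using Esym unfolding R_def by blast
  obtain h where h: "h \<in> V" "hub v = g h" "\<not> is_leaf h" using hub_cluster[OF v] by blast
  have gh: "g h \<subseteq> g' v" using h(2) hub_sub_g' by blast
  have inner: "R\<^sup>*\<^sup>* x y" if "x \<in> g w" "y \<in> g w" "w \<in> V" "g w \<subseteq> g' v" for x y w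
  proof -
    have "(\<lambda>x y. E x y \<and> x \<in> g w \<and> y \<in> g w)\<^sup>*\<^sup>* x y" using inv_connected that unfolding connected_parts_def by blast
    then show ?thesis by (rule rtranclp_mono[THEN predicate2D, rotated]) (use that in \<open>auto simp: R_def\<close>)
  qed
  have hh: "h \<in> g h" using inv_partition h(1) unfolding is_partition_def by blast
  have reach: "R\<^sup>*\<^sup>* h z" if z: "z \<in> g' v" for z
  proof -
    from g'_cases[OF z] show ?thesis
    proof
      assume "z \<in> hub v" then show ?thesis using inner[OF hh _ h(1) gh] h(2) by simp
    next
      assume "\<exists>u\<in>V. is_leaf u \<and> snd (leaf_edge u) \<in> hub v \<and> z \<in> g u"
      then obtain u where u: "u \<in> V" "is_leaf u" "snd (leaf_edge u) \<in> hub v" "z \<in> g u" by blast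
      have e: "fst (leaf_edge u) \<in> g u" "E (fst (leaf_edge u)) (snd (leaf_edge u))" using leaf_edge_facts[OF u(1) u(2)] by blast+
      have gu: "g u \<subseteq> g' v" unfolding merge_step_eq using u by blast
      have 1: "R\<^sup>*\<^sup>* h (snd (leaf_edge u))" using inner[OF hh _ h(1) gh] u(3) h(2) by simp
      have 2: "R (snd (leaf_edge u)) (fst (leaf_edge u))" unfolding R_def using e gu u(3) hub_sub_g' Esym by blast
      have 3: "R\<^sup>*\<^sup>* (fst (leaf_edge u)) z" using inner[OF e(1) u(4) u(1) gu] .
      show ?thesis using 1 2 3 by (meson rtranclp.rtrancl_into_rtrancl rtranclp_trans)
    qed
  qed
  have "R\<^sup>*\<^sup>* a h" using rtranclp_sym[OF Rs reach[OF a]] by blast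
  then show "(\<lambda>x y. E x y \<and> x \<in> g' v \<and> y \<in> g' v)\<^sup>*\<^sup>* a b"
    using reach[OF b] unfolding R_def by (meson rtranclp_trans)
qed

lemma div_Suc_eq: "(a::nat) div 2 ^ j = b div 2 ^ j \<Longrightarrow> a div 2 ^ Suc j = b div 2 ^ Suc j"
  by (metis div_mult2_eq power_Suc2)

lemma inv_prefix_hub: assumes x: "x \<in> V" shows "cname r x div 2 ^ Suc j = Min (hub x) div 2 ^ Suc j"
proof (cases "is_leaf x")
  case False
  have "cname r x div 2 ^ j = cname r (Min (g x)) div 2 ^ j" using inv_prefix x Min_part_in'[OF x] by blast
  then have "cname r x div 2 ^ j = Min (g x) div 2 ^ j" using cname_Min'[OF x] by simp
  then have "cname r x div 2 ^ Suc j = Min (g x) div 2 ^ Suc j" by (rule div_Suc_eq)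
  moreover have "hub x = g x" using False by (simp add: hub_def)
  ultimately show ?thesis by simp
next
  case True
  define y0 where "y0 = snd (leaf_edge x)"
  obtain t where t: "top_diff_bit (Min (g x)) t = j" "t < Min (g x)" "cname r y0 = t" "y0 \<in> V"
    using leaf_edge_facts[OF x True] by (auto simp: y0_def)
  have 1: "cname r x div 2 ^ j = Min (g x) div 2 ^ j"
    using inv_prefix x Min_part_in'[OF x] cname_Min'[OF x] by metis
  have 2: "Min (g x) div 2 ^ Suc j = t div 2 ^ Suc j" using top_diff_bit_parity(3)[OF t(2)] t(1) by simp
  have 3: "t div 2 ^ j = Min (g y0) div 2 ^ j"
    using inv_prefix t(4) Min_part_in'[OF t(4)] cname_Min'[OF t(4)] t(3) by metis
  have a: "cname r x div 2 ^ Suc j = Min (g x) div 2 ^ Suc j" by (rule div_Suc_eq[OF 1])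
  have c: "t div 2 ^ Suc j = Min (g y0) div 2 ^ Suc j" by (rule div_Suc_eq[OF 3])
  have "hub x = g y0" using True by (simp add: hub_def y0_def)
  then show ?thesis using a 2 c by simp
qed

lemma inv_prefix_g': "\<forall>x\<in>V. \<forall>y\<in>g' x. cname r x div 2 ^ Suc j = cname r y div 2 ^ Suc j"
  using inv_prefix_hub hub_same by metis

lemma inv_merged_target_g': "\<forall>x\<in>V. cname r x \<noteq> Min (g' x) \<longrightarrow> (\<exists>t. target r x = Some t \<and> t \<in> cname r ` g' x \<and> top_diff_bit (cname r x) t < Suc j)"
proof (intro ballI impI)
  fix x assume x: "x \<in> V" and ne: "cname r x \<noteq> Min (g' x)"
  show "\<exists>t. target r x = Some t \<and> t \<in> cname r ` g' x \<and> top_diff_bit (cname r x) t < Suc j"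
  proof (cases "cname r x = Min (g x)")
    case False
    then obtain t where "target r x = Some t" "t \<in> cname r ` g x" "top_diff_bit (cname r x) t < j" using inv_merged_target x by blast
    then show ?thesis using g_sub_g'[OF x] by auto
  next
    case True
    have lx: "is_leaf x"
    proof (rule ccontr)
      assume "\<not> is_leaf x"
      then have "Min (g' x) = Min (g x)" using Min_g'[OF x] by (simp add: hub_def)
      then show False using ne True by simp
    qed
    obtain t where t: "target r (Min (g x)) = Some t" "top_diff_bit (Min (g x)) t = j" "cname r (snd (leaf_edge x)) = t"
      "snd (leaf_edge x) \<in> V" using leaf_edge_facts[OF x lx] by blast
    have "target r x = target r (Min (g x))"
      using target_cong'[OF x] Min_part_in'[OF x] cname_Min'[OF x] True by metis
    moreover have "snd (leaf_edge x) \<in> hub x" using inv_self[OF t(4)] lx unfolding hub_def by simp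
    then have "snd (leaf_edge x) \<in> g' x" using hub_sub_g' by blast
    then have "t \<in> cname r ` g' x" using t(3) by blast
    moreover have "top_diff_bit (cname r x) t < Suc j" using t(2) True by simp
    ultimately show ?thesis using t(1) by auto
  qed
qed

lemma inv_root_target_g': "\<forall>x\<in>V. cname r x = Min (g' x) \<longrightarrow> (\<forall>t. target r x = Some t \<longrightarrow> Suc j \<le> top_diff_bit (cname r x) t)"
proof (intro ballI impI allI)
  fix x t assume x: "x \<in> V" and eq: "cname r x = Min (g' x)" and tx: "target r x = Some t"
  have nl: "\<not> is_leaf x"
  proof
    assume lx: "is_leaf x"
    obtain t' where t': "t' < Min (g x)" "cname r (snd (leaf_edge x)) = t'" "snd (leaf_edge x) \<in> V"
      using leaf_edge_facts[OF x lx] by blast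
    have "Min (g' x) = Min (g (snd (leaf_edge x)))" using Min_g'[OF x] lx by (simp add: hub_def)
    also have "\<dots> \<le> t'" using cname_ge'[OF t'(3) inv_self[OF t'(3)]] t'(2) by simp
    finally have "cname r x < Min (g x)" using eq t'(1) by simp
    moreover have "Min (g x) \<le> cname r x" using cname_ge'[OF x inv_self[OF x]] .
    ultimately show False by simp
  qed
  then have cx: "cname r x = Min (g x)" using eq Min_g'[OF x] by (simp add: hub_def)
  have jle: "j \<le> top_diff_bit (cname r x) t" using inv_root_target x cx tx by blast
  have "top_diff_bit (cname r x) t \<noteq> j"
  proof
    assume "top_diff_bit (cname r x) t = j"
    moreover have "target r (Min (g x)) = Some t"
      using target_cong'[OF x] Min_part_in'[OF x] cname_Min'[OF x] cx tx by metis
    ultimately have "is_leaf x" using is_leaf_iff[OF x] cx by auto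
    then show False using nl by simp
  qed
  then show "Suc j \<le> top_diff_bit (cname r x) t" using jle by simp
qed

lemma merge_inv_step: "merge_inv r (Suc j) g'"
  unfolding merge_inv_def using is_partition_g' connected_parts_g' coarse_g' inv_merged_target_g' inv_prefix_g' inv_root_target_g' by blast

end

lemma merge_inv_0: "merge_inv r 0 (cluster r)"
proof -
  have "\<forall>x\<in>V. \<forall>y\<in>cluster r x. cname r x = cname r y"
  proof (intro ballI)
    fix x y assume "x \<in> V" "y \<in> cluster r x"
    then have "cluster r y = cluster r x" using is_partition_same[OF Pp] by blast
    then show "cname r x = cname r y" by (simp add: cname_def)
  qed
  then show ?thesis unfolding merge_inv_def using Pp Pc by (simp add: cname_def)
qed

lemma merge_inv_merge_steps: "merge_inv r j (merge_steps (facts (Suc r)) r (cluster r) j)"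
  by (induction j) (auto simp: merge_inv_0 merge_inv_step)

lemma merge_inv_end: "merge_inv r (nbits N) (cluster (Suc r))"
  using merge_inv_merge_steps by (simp add: cluster_Suc)

lemma end_target:
  assumes x: "x \<in> V" and t: "target r x = Some t"
  shows "\<exists>y\<in>cluster (Suc r) x. cname r y = t"
proof -
  have inv: "merge_inv r (nbits N) (cluster (Suc r))" by (rule merge_inv_end)
  show ?thesis
  proof (cases "cname r x = Min (cluster (Suc r) x)")
    case False
    have "\<forall>x\<in>V. cname r x \<noteq> Min (cluster (Suc r) x) \<longrightarrow> (\<exists>t. target r x = Some t \<and> t \<in> cname r ` cluster (Suc r) x \<and> top_diff_bit (cname r x) t < nbits N)"
      using inv unfolding merge_inv_def by blast
    then obtain t' where "target r x = Some t'" "t' \<in> cname r ` cluster (Suc r) x" using x False by blast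
    then show ?thesis using t by auto
  next
    case True
    then have "nbits N \<le> top_diff_bit (cname r x) t" using inv x t unfolding merge_inv_def by blast
    moreover have "cname r x \<in> V" using cname_V[OF Pp Pc x] .
    moreover obtain x' y where "E x' y" "cname r y = t" using target_SomeD[OF t] by blast
    moreover have "y \<in> V" using \<open>E x' y\<close> edge_in_V by blast
    ultimately have "nbits N \<le> top_diff_bit (cname r x) (cname r y)" "cname r x < 2 ^ nbits N" "cname r y < 2 ^ nbits N"
      using V_lt_pow cname_V[OF Pp Pc] by auto
    then show ?thesis using top_diff_bit_less nbits_N_pos by (meson leD)
  qed
qed

end

lemma cluster_inv: "is_partition V (cluster r) \<and> connected_parts V E (cluster r)"
proof (induction r)
  case 0
  show ?case unfolding is_partition_def connected_parts_def by (simp add: cluster_0)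
next
  case (Suc r)
  then show ?case using merge_inv_end[of r] unfolding merge_inv_def by blast
qed


lemma cluster_partition: "is_partition V (cluster r)" using cluster_inv by blast
lemma cluster_connected: "connected_parts V E (cluster r)" using cluster_inv by blast
lemma cluster_self: "v \<in> V \<Longrightarrow> v \<in> cluster r v" using cluster_partition unfolding is_partition_def by blast
lemma cluster_sameD: "v \<in> V \<Longrightarrow> y \<in> cluster r v \<Longrightarrow> cluster r y = cluster r v \<and> y \<in> V"
  using is_partition_same[OF cluster_partition] by blast
lemma cluster_coarse: "v \<in> V \<Longrightarrow> cluster r v \<subseteq> cluster (Suc r) v"
  using merge_inv_end[OF cluster_partition cluster_connected] unfolding merge_inv_def by blast
lemma cluster_subV: "v \<in> V \<Longrightarrow> cluster r v \<subseteq> V"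
  using cluster_partition unfolding is_partition_def by blast
lemma cluster_coarse_add: "v \<in> V \<Longrightarrow> cluster r v \<subseteq> cluster (r + k) v"
  by (induction k) (auto dest: cluster_coarse)

lemmas end_target' = end_target[OF cluster_partition cluster_connected]
lemmas cname_eq_cluster' = cname_eq_cluster[OF cluster_partition cluster_connected]

lemma cname_ne: "x \<in> V \<Longrightarrow> y \<in> V \<Longrightarrow> cluster r y \<noteq> cluster r x \<Longrightarrow> cname r y \<noteq> cname r x"
  using cname_eq_cluster' by blast

lemma meets_via_own_target:
  assumes x: "x \<in> V" and t: "target r x = Some t"
  shows "\<exists>y\<in>cluster (Suc r) x. cluster r y \<noteq> cluster r x"
proof -
  obtain y where y: "y \<in> cluster (Suc r) x" "cname r y = t" using end_target'[OF x t] by blast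
  have "t < cname r x" using target_SomeD[OF t] by simp
  then have "cluster r y \<noteq> cluster r x" using y(2) by (auto simp: cname_def)
  then show ?thesis using y(1) by blast
qed

lemma meets_via_incoming_target:
  assumes x: "x \<in> V" and z: "z \<in> V" "target r z = Some (cname r x)" "cluster r z \<noteq> cluster r x"
  shows "\<exists>y\<in>cluster (Suc r) x. cluster r y \<noteq> cluster r x"
proof -
  obtain y where y: "y \<in> cluster (Suc r) z" "cname r y = cname r x" using end_target'[OF z(1) z(2)] by blast
  have yV: "y \<in> V" "cluster (Suc r) y = cluster (Suc r) z" using cluster_sameD[OF z(1) y(1)] by auto
  have "cluster r y = cluster r x" using cname_eq_cluster'[OF yV(1) x y(2)] .
  then have "x \<in> cluster (Suc r) y" using cluster_self[OF x] cluster_coarse[OF yV(1)] by blast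
  then have "cluster (Suc r) x = cluster (Suc r) z" using cluster_sameD[OF yV(1)] yV(2) by metis
  then have "z \<in> cluster (Suc r) x" using cluster_self[OF z(1)] by simp
  then show ?thesis using z(3) by blast
qed

text \<open>If the cluster of \<open>x\<close> neither targets nor is targeted, take an edge \<open>a b\<close> leaving it:
  \<open>b\<close>'s cluster has the larger name, so it targets a cluster named below \<open>cname r x\<close>
  and merges with it. Hence in round \<open>r + 1\<close> the cluster of \<open>x\<close> has grown or sees a smaller neighbour.\<close>

lemma meets_via_min_edge:
  assumes nv: "\<forall>v\<in>V. cluster r v \<noteq> V" and x: "x \<in> V"
    and noA: "target r x = None"
    and noB: "\<not> (\<exists>z\<in>V. target r z = Some (cname r x) \<and> cluster r z \<noteq> cluster r x)"
  shows "\<exists>y\<in>cluster (Suc (Suc r)) x. cluster r y \<noteq> cluster r x"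
proof -
  have "cluster r x \<noteq> V" using nv x by blast
  then obtain b0 where b0: "b0 \<in> V" "b0 \<notin> cluster r x" using cluster_subV[OF x] by blast
  obtain a b where ab: "a \<in> cluster r x" "b \<notin> cluster r x" "E a b"
    using cross[OF Vconn[OF x b0(1)] cluster_self[OF x] b0(2)] by blast
  have aV: "a \<in> V" "cluster r a = cluster r x" using cluster_sameD[OF x ab(1)] by auto
  have bV: "b \<in> V" using ab(3) edge_in_V by blast
  have gb: "cluster r b \<noteq> cluster r x" using ab(2) cluster_self[OF bV] by blast
  have "\<not> cname r b < cname r x" using target_exists[OF ab(1) ab(3)] noA by auto
  moreover have "cname r b \<noteq> cname r x" using cname_ne[OF x bV gb] .
  moreover have cna: "cname r a = cname r x" using aV(2) by (simp add: cname_def)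
  ultimately have "cname r a < cname r b" by simp
  then obtain t where t: "target r b = Some t" "t \<le> cname r x"
    using target_exists[OF cluster_self[OF bV] Esym[OF ab(3)], where r = r] cna by auto
  have "t \<noteq> cname r x" using noB t(1) bV gb by blast
  then have tl: "t < cname r x" using t(2) by simp
  obtain e where e: "e \<in> cluster (Suc r) b" "cname r e = t" using end_target'[OF bV t(1)] by blast
  have eV: "e \<in> V" "cluster (Suc r) e = cluster (Suc r) b" using cluster_sameD[OF bV e(1)] by auto
  have "cname r e \<in> cluster (Suc r) b"
    using cname_in[OF cluster_partition cluster_connected eV(1)] cluster_coarse[OF eV(1)] eV(2) by blast
  then have mb: "Min (cluster (Suc r) b) < cname r x"
    using is_partition_Min_le[OF cluster_partition bV] e(2) tl by fastforce
  show ?thesis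
  proof (cases "cluster (Suc r) x = cluster r x")
    case False
    then obtain y where y: "y \<in> cluster (Suc r) x" "y \<notin> cluster r x" using cluster_coarse[OF x] by blast
    have "y \<in> V" using cluster_sameD[OF x y(1)] by blast
    then have "cluster r y \<noteq> cluster r x" using y(2) cluster_self by blast
    then show ?thesis using y(1) cluster_coarse[OF x] by blast
  next
    case True
    have "cname (Suc r) b < cname (Suc r) x" using mb True by (simp add: cname_def)
    moreover have "a \<in> cluster (Suc r) x" using ab(1) True by simp
    ultimately obtain t1 where t1: "target (Suc r) x = Some t1"
      using target_exists[of a "Suc r" x b] ab(3) by blast
    obtain y where y: "y \<in> cluster (Suc (Suc r)) x" "cluster (Suc r) y \<noteq> cluster (Suc r) x"
      using meets_via_own_target[OF x t1] by blast
    have "y \<notin> cluster (Suc r) x" using y(2) cluster_sameD[OF x] by blast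
    then have "y \<notin> cluster r x" using True by simp
    moreover have "y \<in> V" using cluster_sameD[OF x y(1)] by blast
    ultimately have "cluster r y \<noteq> cluster r x" using cluster_self by blast
    then show ?thesis using y(1) by blast
  qed
qed

lemma meets_other_cluster:
  assumes nv: "\<forall>v\<in>V. cluster r v \<noteq> V" and x: "x \<in> V"
  shows "\<exists>y\<in>cluster (Suc (Suc r)) x. cluster r y \<noteq> cluster r x"
proof -
  consider t where "target r x = Some t"
    | z where "z \<in> V" "target r z = Some (cname r x)" "cluster r z \<noteq> cluster r x"
    | "target r x = None" "\<not> (\<exists>z\<in>V. target r z = Some (cname r x) \<and> cluster r z \<noteq> cluster r x)"
    by (cases "target r x") auto
  then show ?thesis
  proof cases
    case 1
    then show ?thesis using meets_via_own_target[OF x] cluster_coarse[OF x] by blast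
  next
    case 2
    then show ?thesis using meets_via_incoming_target[OF x] cluster_coarse[OF x] by blast
  next
    case 3
    then show ?thesis using meets_via_min_edge[OF nv x] by blast
  qed
qed

definition num_clusters :: "nat \<Rightarrow> nat" where "num_clusters r = card (cluster r ` V)"

lemma num_clusters_halve:
  assumes nv: "\<forall>v\<in>V. cluster r v \<noteq> V"
  shows "2 * num_clusters (Suc (Suc r)) \<le> num_clusters r"
proof -
  define f where "f X = cluster (Suc (Suc r)) (Min X)" for X
  have fX: "f (cluster r x) = cluster (Suc (Suc r)) x" if x: "x \<in> V" for x
  proof -
    have "Min (cluster r x) \<in> cluster r x" using is_partition_Min_in[OF cluster_partition x] .
    then have "Min (cluster r x) \<in> cluster (Suc (Suc r)) x" using cluster_coarse_add[OF x, of r 2] by auto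
    then show ?thesis unfolding f_def using cluster_sameD[OF x] by blast
  qed
  have img: "f ` (cluster r ` V) = cluster (Suc (Suc r)) ` V" using fX by (force simp: image_image)
  have "2 * card (f ` (cluster r ` V)) \<le> card (cluster r ` V)"
  proof (rule fiber_count)
    show "finite (cluster r ` V)" using finV by simp
    show "\<forall>a\<in>cluster r ` V. \<exists>a'\<in>cluster r ` V. a' \<noteq> a \<and> f a' = f a"
    proof
      fix a assume "a \<in> cluster r ` V"
      then obtain x where x: "x \<in> V" "a = cluster r x" by blast
      obtain y where y: "y \<in> cluster (Suc (Suc r)) x" "cluster r y \<noteq> cluster r x" using meets_other_cluster[OF nv x(1)] by blast
      have yV: "y \<in> V" "cluster (Suc (Suc r)) y = cluster (Suc (Suc r)) x" using cluster_sameD[OF x(1) y(1)] by auto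
      show "\<exists>a'\<in>cluster r ` V. a' \<noteq> a \<and> f a' = f a"
        using yV y(2) x fX by (intro bexI[of _ "cluster r y"]) auto
    qed
  qed
  then show ?thesis using img by (simp add: num_clusters_def)
qed

lemma cluster_all_stays: "\<exists>v\<in>V. cluster r v = V \<Longrightarrow> \<exists>v\<in>V. cluster (r + k) v = V"
  using cluster_coarse_add cluster_subV by (metis subset_antisym)

lemma num_clusters_0: "num_clusters 0 = card V"
proof -
  have "cluster 0 ` V = (\<lambda>x. {x}) ` V" by (simp add: cluster_0)
  moreover have "card ((\<lambda>x. {x}) ` V) = card V" by (rule card_image) (simp add: inj_on_def)
  ultimately show ?thesis by (simp add: num_clusters_def)
qed

lemma num_clusters_pos: "1 \<le> num_clusters r"
  using finV Vne by (simp add: num_clusters_def card_gt_0_iff Suc_le_eq)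

lemma num_clusters_bound: "(\<exists>v\<in>V. cluster (2 * k) v = V) \<or> num_clusters (2 * k) * 2 ^ k \<le> card V"
proof (induction k)
  case 0 then show ?case by (simp add: num_clusters_0)
next
  case (Suc k)
  show ?case
  proof (cases "\<exists>v\<in>V. cluster (2 * k) v = V")
    case True
    then have "\<exists>v\<in>V. cluster (2 * k + 2) v = V" by (rule cluster_all_stays)
    then show ?thesis by simp
  next
    case False
    then have nv: "\<forall>v\<in>V. cluster (2 * k) v \<noteq> V" by blast
    have "2 * num_clusters (Suc (Suc (2 * k))) \<le> num_clusters (2 * k)" by (rule num_clusters_halve[OF nv])
    then have "num_clusters (2 * Suc k) * 2 * 2 ^ k \<le> num_clusters (2 * k) * 2 ^ k" by (simp add: mult_le_mono1)
    then have "num_clusters (2 * Suc k) * 2 ^ Suc k \<le> num_clusters (2 * k) * 2 ^ k" by (simp add: mult.assoc)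
    then show ?thesis using Suc False by linarith
  qed
qed

lemma cluster_final: "v \<in> V \<Longrightarrow> cluster (2 * nbits (card V)) v = V"
proof -
  assume v: "v \<in> V"
  define k where "k = nbits (card V)"
  have "\<exists>w\<in>V. cluster (2 * k) w = V"
  proof (rule ccontr)
    assume "\<not> ?thesis"
    then have "num_clusters (2 * k) * 2 ^ k \<le> card V" using num_clusters_bound by blast
    moreover have "card V < 2 ^ k" using nbits_gt by (simp add: k_def)
    moreover have "1 \<le> num_clusters (2 * k)" by (rule num_clusters_pos)
    ultimately show False
      by (metis le_trans linorder_not_le mult_le_mono1 nat_mult_1)
  qed
  then obtain w where w: "w \<in> V" "cluster (2 * k) w = V" by blast
  then have "cluster (2 * k) v = cluster (2 * k) w" using cluster_sameD[OF w(1), of v] v by auto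
  then show ?thesis using w by (simp add: k_def)
qed


section \<open>Executions\<close>

context fixes s :: nat and m :: "'m"
begin

definition cfg :: "nat \<Rightarrow> nat \<Rightarrow> 'm st" where "cfg t v = exec broadcast_alg N V E (\<lambda>x. x) s m t v"

abbreviation aux_at where "aux_at t v \<equiv> decode_aux (snd (cfg t v))"
abbreviation collected_at where "collected_at t v \<equiv> set (collected (aux_at t v))"
abbreviation known_at where "known_at t v \<equiv> set (knowledge (aux_at t v))"

definition transmitters :: "nat \<Rightarrow> nat \<Rightarrow> nat set" where
  "transmitters t v = {u \<in> V. E v u \<and> is_transmit (act (cfg t u))}"

lemma transmitters_fin: "finite (transmitters t v)" using finV by (simp add: transmitters_def)

lemma cfg_0: "cfg 0 v = init (card V) N v (if v = s then Some m else None)"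
  by (simp add: cfg_def broadcast_alg_def)

lemma cfg_Suc: "cfg (Suc t) v = upd (cfg t v) (if act (cfg t v) = Listen
   then Some (image_mset (cfg t) (mset_set (transmitters t v))) else None)"
proof -
  have fin: "finite {u \<in> V. E v u \<and> is_transmit (act (cfg t u))}" using finV by simp
  have "image_mset (\<lambda>u. payload (act (cfg t u))) (mset_set (transmitters t v)) = image_mset (cfg t) (mset_set (transmitters t v))"
    by (rule image_mset_cong) (use fin in \<open>auto simp: transmitters_def act_payload\<close>)
  then show ?thesis by (simp add: cfg_def broadcast_alg_def Let_def transmitters_def)
qed

lemma aux_at_basic: "clock (aux_at t v) = t \<and> own_id (aux_at t v) = v \<and> net_size (aux_at t v) = card V \<and> id_bound (aux_at t v) = N"
proof (induction t arbitrary: v)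
  case 0 then show ?case by (simp add: cfg_0 init_def)
next
  case (Suc t) then show ?case by (simp add: cfg_Suc upd_def Let_def)
qed

lemma aux_at_clock[simp]: "clock (aux_at t v) = t" using aux_at_basic by blast
lemma aux_at_own_id[simp]: "own_id (aux_at t v) = v" using aux_at_basic by blast
lemma aux_at_net_size[simp]: "net_size (aux_at t v) = card V" using aux_at_basic by blast
lemma aux_at_id_bound[simp]: "id_bound (aux_at t v) = N" using aux_at_basic by blast

definition received :: "nat \<Rightarrow> nat \<Rightarrow> 'm st multiset option" where
  "received t v = (if act (cfg t v) = Listen then Some (image_mset (cfg t) (mset_set (transmitters t v))) else None)"

lemma collected_at_Suc_newinfo: "collected_at (Suc t) v = collected_at t v \<union> snd (newinfo (cfg t v) (received t v))"
proof -
  have "set (SOME xs. set xs = snd (newinfo (cfg t v) (received t v))) = snd (newinfo (cfg t v) (received t v))"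
    using finite_list[OF newinfo_fin] by (rule someI_ex)
  then show ?thesis by (simp add: cfg_Suc upd_def Let_def received_def[symmetric])
qed

lemma known_at_Suc: "known_at (Suc t) v = (if commit (card V) N t then collected_at (Suc t) v else known_at t v)"
  by (simp add: cfg_Suc upd_def Let_def received_def[symmetric])

lemma msg_Suc: "fst (cfg (Suc t) v) = fst (newinfo (cfg t v) (received t v))"
  by (simp add: cfg_Suc upd_def Let_def received_def[symmetric])

lemma set_received: "received t v = Some M \<Longrightarrow> set_mset M = cfg t ` transmitters t v"
  by (auto simp: received_def transmitters_fin split: if_splits)

definition accepted :: "nat \<Rightarrow> nat \<Rightarrow> nat set" where
  "accepted t v = {u \<in> transmitters t v. accepts (aux_at t v) (cfg t u)}"

lemma collected_at_Suc: "collected_at (Suc t) v = collected_at t v \<union> (if act (cfg t v) = Listen then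
   (case slot_mode (card V) N t of
      Exchange r b p \<Rightarrow> (\<lambda>u. Nb r v (group_name (known_at t v)) u (group_name (known_at t u))) ` transmitters t v
    | _ \<Rightarrow> (\<Union>u\<in>accepted t v. collected_at t u)) else {})"
proof (cases "act (cfg t v) = Listen")
  case False
  then show ?thesis by (simp add: collected_at_Suc_newinfo received_def newinfo_def Let_def)
next
  case True
  define M where "M = image_mset (cfg t) (mset_set (transmitters t v))"
  have received: "received t v = Some M" using True by (simp add: received_def M_def)
  have sM: "set_mset M = cfg t ` transmitters t v" using set_received[OF received] .
  show ?thesis
  proof (cases "slot_mode (card V) N t")
    case (Exchange r b p)
    then show ?thesis using True by (simp add: collected_at_Suc_newinfo received newinfo_def Let_def sM image_image)
  next
    case (Handshake r sg)
    then show ?thesis using True by (auto simp add: collected_at_Suc_newinfo received newinfo_def Let_def sM accepted_def)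
  next
    case (Sweep r sg w)
    then show ?thesis using True by (auto simp add: collected_at_Suc_newinfo received newinfo_def Let_def sM accepted_def)
  qed
qed

lemma collected_at_mono: "collected_at t v \<subseteq> collected_at (Suc t) v" using collected_at_Suc by blast

lemma collected_at_mono': "t \<le> t' \<Longrightarrow> collected_at t v \<subseteq> collected_at t' v"
  by (induction rule: dec_induct) (use collected_at_mono in blast)+

lemma msg_inv: "fst (cfg t v) = (if Me s \<in> collected_at t v then Some m else None)"
proof (induction t arbitrary: v)
  case 0 then show ?case by (simp add: cfg_0 init_def)
next
  case (Suc t)
  show ?case
  proof (cases "received t v")
    case None
    then have "act (cfg t v) \<noteq> Listen" by (simp add: received_def split: if_splits)
    then show ?thesis using None Suc[of v] by (simp add: msg_Suc newinfo_def collected_at_Suc)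
  next
    case (Some M)
    have L: "act (cfg t v) = Listen" using Some by (simp add: received_def split: if_splits)
    have sM: "set_mset M = cfg t ` transmitters t v" using set_received[OF Some] .
    show ?thesis
    proof (cases "slot_mode (card V) N t")
      case (Exchange r b p)
      then show ?thesis using Some Suc[of v] L by (auto simp add: msg_Suc newinfo_def collected_at_Suc)
    next
      case (Handshake r sg)
      define P where "P = {q \<in> set_mset M. accepts (aux_at t v) q}"
      have P: "P = cfg t ` accepted t v" unfolding P_def accepted_def sM by auto
      have "fst (cfg (Suc t) v) = merge_msg (cfg t v) P"
        unfolding msg_Suc Some P_def using Handshake by (intro newinfo_msg) simp
      also have "\<dots> = (if fst (cfg t v) = Some m \<or> (\<exists>q'\<in>P. fst q' = Some m) then Some m else None)"
        by (rule merge_msg_val) (use Suc P in auto)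
      finally show ?thesis using Suc P L Handshake by (auto simp: collected_at_Suc)
    next
      case (Sweep r sg w)
      define P where "P = {q \<in> set_mset M. accepts (aux_at t v) q}"
      have P: "P = cfg t ` accepted t v" unfolding P_def accepted_def sM by auto
      have "fst (cfg (Suc t) v) = merge_msg (cfg t v) P"
        unfolding msg_Suc Some P_def using Sweep by (intro newinfo_msg) simp
      also have "\<dots> = (if fst (cfg t v) = Some m \<or> (\<exists>q'\<in>P. fst q' = Some m) then Some m else None)"
        by (rule merge_msg_val) (use Suc P in auto)
      finally show ?thesis using Suc P L Sweep by (auto simp: collected_at_Suc)
    qed
  qed
qed



lemma receive_collected:
  assumes "act (cfg t v) = Listen" "\<forall>r b p. slot_mode (card V) N t \<noteq> Exchange r b p" "u \<in> accepted t v"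
  shows "collected_at t u \<subseteq> collected_at (Suc t) v"
  using assms by (cases "slot_mode (card V) N t") (auto simp: collected_at_Suc[of t v])

lemma collected_at_Suc_subset:
  assumes "\<forall>r b p. slot_mode (card V) N t \<noteq> Exchange r b p"
  shows "collected_at (Suc t) v \<subseteq> collected_at t v \<union> (\<Union>u\<in>accepted t v. collected_at t u)"
  using assms by (cases "slot_mode (card V) N t") (auto simp: collected_at_Suc[of t v] split: if_splits)

lemma act_Sweep:
  assumes "slot_mode (card V) N t = Sweep r sg w"
  shows "act (cfg t v) = (case sweep_act (card V) w (level (known_at t v) v) of
            Some True \<Rightarrow> Transmit (cfg t v) | Some False \<Rightarrow> Listen | None \<Rightarrow> Idle)"
  using assms by (simp add: act_def Let_def)

lemma accepted_Sweep:
  assumes "slot_mode (card V) N t = Sweep r sg w"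
  shows "u \<in> accepted t v \<longleftrightarrow> u \<in> transmitters t v \<and> group_name (known_at t u) = group_name (known_at t v)"
  using assms by (simp add: accepted_def accepts_def Let_def)

lemma transmitters_iff: "u \<in> transmitters t v \<longleftrightarrow> u \<in> V \<and> E v u \<and> is_transmit (act (cfg t u))"
  by (simp add: transmitters_def)

section \<open>Sweeps\<close>

context
  fixes ts r sg :: nat and KG :: "nat \<Rightarrow> fact set" and g :: "nat \<Rightarrow> nat set"
  assumes sweep_slot: "\<forall>w<2 * card V. slot_mode (card V) N (ts + w) = Sweep r sg w"
    and sweep_known: "\<forall>w<2 * card V. \<forall>v\<in>V. known_at (ts + w) v = KG v"
    and g_part: "is_partition V g"
    and KG_members: "\<forall>v\<in>V. members (KG v) = g v \<and> group_name (KG v) = Min (g v)"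
    and KG_const: "\<forall>v\<in>V. \<forall>y\<in>g v. KG y = KG v"
    and KG_reach: "\<forall>v\<in>V. \<forall>x\<in>g v. (known_adj (KG v))\<^sup>*\<^sup>* (Min (g v)) x"
    and KG_edges: "\<forall>v a b. v \<in> V \<longrightarrow> known_adj (KG v) a b \<longrightarrow> E a b"
begin

abbreviation depth :: "nat \<Rightarrow> nat" where "depth v \<equiv> level (KG v) v"

lemma g_self: "v \<in> V \<Longrightarrow> v \<in> g v"
  using g_part unfolding is_partition_def by blast

lemma g_same: "v \<in> V \<Longrightarrow> y \<in> g v \<Longrightarrow> g y = g v \<and> y \<in> V"
  using is_partition_same[OF g_part] .

lemma g_in_ball: "v \<in> V \<Longrightarrow> x \<in> g v \<Longrightarrow> \<exists>k. x \<in> known_ball (KG v) k"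
  using reach_ball[of "KG v" x] KG_reach KG_members by simp

lemma depth_lt: assumes v: "v \<in> V" shows "depth v < card V"
proof -
  have "depth v < card (members (KG v))"
  proof (rule level_bound)
    show "finite (members (KG v))" using KG_members is_partition_fin[OF g_part v] v by simp
    show "\<forall>x\<in>members (KG v). \<exists>k. x \<in> known_ball (KG v) k" using g_in_ball v KG_members by simp
    show "group_name (KG v) \<in> members (KG v)" using KG_members is_partition_Min_in[OF g_part v] v by simp
    show "v \<in> members (KG v)" using KG_members g_self v by simp
  qed
  moreover have "g v \<subseteq> V" using g_part v unfolding is_partition_def by blast
  then have "card (g v) \<le> card V" using finV by (rule card_mono[rotated])
  then have "card (members (KG v)) \<le> card V" using KG_members v by simp
  ultimately show ?thesis by simp
qed

lemma depth_0: "v \<in> V \<Longrightarrow> depth v = 0 \<Longrightarrow> v = Min (g v)"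
  using level_0[OF g_in_ball[OF _ g_self]] KG_members by simp

lemma depth_parent:
  assumes v: "v \<in> V" and l: "depth v = Suc k"
  shows "\<exists>p\<in>g v. E p v \<and> depth p = k"
proof -
  obtain p where p: "known_adj (KG v) p v" "level (KG v) p = k"
    using level_Suc[OF g_in_ball[OF v g_self[OF v]]] l by auto
  have "p \<in> g v" using known_adj_members[OF p(1)] KG_members v by simp
  moreover then have "KG p = KG v" using KG_const v by blast
  moreover have "E p v" using KG_edges v p(1) by blast
  ultimately show ?thesis using p(2) by (intro bexI[of _ p]) auto
qed

lemma sweep_not_exchange: "w < 2 * card V \<Longrightarrow> \<forall>r b p. slot_mode (card V) N (ts + w) \<noteq> Exchange r b p"
  using sweep_slot by simp

lemma sweep_act_at:
  assumes "w < 2 * card V" "v \<in> V"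
  shows "act (cfg (ts + w) v) = (case sweep_act (card V) w (depth v) of
     Some True \<Rightarrow> Transmit (cfg (ts + w) v) | Some False \<Rightarrow> Listen | None \<Rightarrow> Idle)"
  using act_Sweep[OF sweep_slot[rule_format, OF assms(1)]] sweep_known assms by simp

lemma sweep_accepted:
  assumes "w < 2 * card V" "v \<in> V"
  shows "u \<in> accepted (ts + w) v \<longleftrightarrow> u \<in> V \<and> E v u \<and> is_transmit (act (cfg (ts + w) u)) \<and> g u = g v"
proof -
  have "u \<in> V \<Longrightarrow> group_name (KG u) = group_name (KG v) \<longleftrightarrow> g u = g v"
    using KG_members assms is_partition_name_inj[OF g_part, of u v] by auto
  then show ?thesis
    using accepted_Sweep[OF sweep_slot[rule_format, of w]] sweep_known assms transmitters_iff by auto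
qed

lemma sweep_transfer:
  assumes w: "w < 2 * card V" and v: "v \<in> V" and u: "u \<in> V" "E v u" "g u = g v"
    and "sweep_act (card V) w (depth u) = Some True" and "sweep_act (card V) w (depth v) = Some False"
  shows "collected_at (ts + w) u \<subseteq> collected_at (ts + Suc w) v"
proof -
  have "act (cfg (ts + w) v) = Listen" using sweep_act_at[OF w v] assms by simp
  moreover have "u \<in> accepted (ts + w) v" using sweep_accepted[OF w v] sweep_act_at[OF w u(1)] assms by simp
  ultimately show ?thesis using receive_collected[OF _ sweep_not_exchange[OF w]] by simp
qed

lemma sweep_stays_in_part:
  "w \<le> 2 * card V \<Longrightarrow> v \<in> V \<Longrightarrow> collected_at (ts + w) v \<subseteq> (\<Union>x\<in>g v. collected_at ts x)"
proof (induction w arbitrary: v)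
  case 0 then show ?case using g_self by auto
next
  case (Suc w)
  have w: "w < 2 * card V" using Suc.prems by simp
  have acc: "collected_at (ts + w) u \<subseteq> (\<Union>x\<in>g v. collected_at ts x)" if u: "u \<in> accepted (ts + w) v" for u
  proof -
    have "u \<in> V" "g u = g v" using sweep_accepted[OF w Suc.prems(2)] u by auto
    then show ?thesis using Suc.IH[of u] w by simp
  qed
  have "collected_at (Suc (ts + w)) v \<subseteq> collected_at (ts + w) v \<union> (\<Union>u\<in>accepted (ts + w) v. collected_at (ts + w) u)"
    by (rule collected_at_Suc_subset[OF sweep_not_exchange[OF w]])
  also have "\<dots> \<subseteq> (\<Union>x\<in>g v. collected_at ts x)"
    using Suc.IH[of v] w Suc.prems(2) acc by (intro Un_least UN_least) auto
  finally show ?case by simp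
qed

lemma sweep_upcast:
  "x \<in> V \<Longrightarrow> depth x = k + i \<Longrightarrow>
     \<exists>y\<in>g x. depth y = k \<and> collected_at ts x \<subseteq> collected_at (ts + (card V - 1 - k)) y"
proof (induction i arbitrary: k)
  case 0
  show ?case using 0 g_self collected_at_mono' by (metis add_0_right le_add1)
next
  case (Suc i)
  obtain y where y: "y \<in> g x" "depth y = Suc k" "collected_at ts x \<subseteq> collected_at (ts + (card V - 1 - Suc k)) y"
    using Suc.IH[of "Suc k"] Suc.prems by auto
  have yV: "y \<in> V" "g y = g x" using g_same[OF Suc.prems(1) y(1)] by auto
  obtain p where p: "p \<in> g y" "E p y" "depth p = k" using depth_parent[OF yV(1) y(2)] by blast
  have pV: "p \<in> V" "g p = g y" using g_same[OF yV(1) p(1)] by auto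
  have "Suc k < card V" using depth_lt[OF yV(1)] y(2) by simp
  then have "\<exists>d. card V = k + 2 + d" by presburger
  then obtain d where nd: "card V = k + 2 + d" ..
  have "sweep_act (card V) d (depth y) = Some True" "sweep_act (card V) d (depth p) = Some False"
    using nd y(2) p(3) by (auto simp: sweep_act_def)
  then have "collected_at (ts + d) y \<subseteq> collected_at (ts + Suc d) p"
    using sweep_transfer[OF _ pV(1) yV(1) p(2) pV(2)[symmetric]] nd by simp
  moreover have "card V - 1 - Suc k = d" "card V - 1 - k = Suc d" using nd by simp_all
  ultimately show ?case using y(3) p(1,3) yV(2) by auto
qed

lemma sweep_root_gathers:
  "v \<in> V \<Longrightarrow> (\<Union>x\<in>g v. collected_at ts x) \<subseteq> collected_at (ts + (card V - 1)) (Min (g v))"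
proof (intro UN_least)
  fix x assume v: "v \<in> V" and x: "x \<in> g v"
  have xV: "x \<in> V" "g x = g v" using g_same[OF v x] by auto
  obtain y where y: "y \<in> g x" "depth y = 0" "collected_at ts x \<subseteq> collected_at (ts + (card V - 1)) y"
    using sweep_upcast[OF xV(1), of 0 "depth x"] by auto
  have "y \<in> V" "g y = g x" using g_same[OF xV(1) y(1)] by auto
  then have "y = Min (g v)" using depth_0[of y] y(2) xV(2) by simp
  then show "collected_at ts x \<subseteq> collected_at (ts + (card V - 1)) (Min (g v))" using y(3) by simp
qed

lemma sweep_downcast:
  "x \<in> V \<Longrightarrow> depth x = k \<Longrightarrow> (\<Union>y\<in>g x. collected_at ts y) \<subseteq> collected_at (ts + card V + k) x"
proof (induction k arbitrary: x)
  case 0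
  then have "x = Min (g x)" using depth_0 by blast
  then have "(\<Union>y\<in>g x. collected_at ts y) \<subseteq> collected_at (ts + (card V - 1)) x"
    using sweep_root_gathers[OF 0(1)] by simp
  also have "\<dots> \<subseteq> collected_at (ts + card V + 0) x" by (rule collected_at_mono') simp
  finally show ?case .
next
  case (Suc k)
  obtain p where p: "p \<in> g x" "E p x" "depth p = k" using depth_parent[OF Suc.prems] by blast
  have pV: "p \<in> V" "g p = g x" using g_same[OF Suc.prems(1) p(1)] by auto
  have w: "card V + k < 2 * card V" using depth_lt[OF Suc.prems(1)] Suc.prems(2) by simp
  have "sweep_act (card V) (card V + k) (depth p) = Some True"
    "sweep_act (card V) (card V + k) (depth x) = Some False"
    using p(3) Suc.prems(2) by (auto simp: sweep_act_def)
  then have "collected_at (ts + (card V + k)) p \<subseteq> collected_at (ts + Suc (card V + k)) x"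
    using sweep_transfer[OF w Suc.prems(1) pV(1) Esym[OF p(2)] pV(2)] by blast
  moreover have "(\<Union>y\<in>g x. collected_at ts y) \<subseteq> collected_at (ts + card V + k) p"
    using Suc.IH[OF pV(1) p(3)] pV(2) by simp
  ultimately show ?case by (auto simp: add.assoc)
qed

lemma sweep_gathers:
  "\<forall>v\<in>V. collected_at (ts + 2 * card V) v = (\<Union>x\<in>g v. collected_at ts x)"
proof
  fix v assume v: "v \<in> V"
  have "(\<Union>x\<in>g v. collected_at ts x) \<subseteq> collected_at (ts + card V + depth v) v"
    using sweep_downcast[OF v] by blast
  also have "\<dots> \<subseteq> collected_at (ts + 2 * card V) v"
    using depth_lt[OF v] by (intro collected_at_mono') simp
  finally show "collected_at (ts + 2 * card V) v = (\<Union>x\<in>g v. collected_at ts x)"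
    using sweep_stays_in_part[OF _ v, of "2 * card V"] by blast
qed

end

definition seg_start :: "nat \<Rightarrow> nat \<Rightarrow> nat" where
  "seg_start r sg = r * round_len (card V) N + 2 * nbits N + sg * sweep_len (card V)"

lemma known_at_const: "\<forall>w<k. \<not> commit (card V) N (t + w) \<Longrightarrow> known_at (t + k) v = known_at t v"
  by (induction k) (auto simp: known_at_Suc)

lemma collected_at_nolisten: "act (cfg t v) \<noteq> Listen \<Longrightarrow> collected_at (Suc t) v = collected_at t v"
  by (simp add: collected_at_Suc)

definition round_start :: "nat \<Rightarrow> bool" where
  "round_start r = (\<forall>v\<in>V. known_at (r * round_len (card V) N) v = pooled (facts r) (cluster r v) \<and> collected_at (r * round_len (card V) N) v = pooled (facts r) (cluster r v))"

lemma round_start_0: "round_start 0"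
  unfolding round_start_def by (simp add: cfg_0 init_def pooled_def facts_0 cluster_0)

lemma group_name_cluster: "v \<in> V \<Longrightarrow> group_name (pooled (facts r) (cluster r v)) = cname r v"
  by (simp add: group_name_pooled cname_def)

section \<open>The exchange phase\<close>

definition bit_slot :: "nat \<Rightarrow> nat \<Rightarrow> bool" where "bit_slot x o' = ((x div 2 ^ (o' div 2)) mod 2 = o' mod 2)"

lemma act_Exchange:
  assumes "slot_mode (card V) N t = Exchange r b p"
  shows "act (cfg t v) = (if (v div 2 ^ b) mod 2 = p then Transmit (cfg t v) else Listen)"
  using assms by (simp add: act_def Let_def)

lemma exchange_phase:
  assumes rs: "round_start r"
  shows "ofs \<le> 2 * nbits N \<Longrightarrow> \<forall>v\<in>V. known_at (r * round_len (card V) N + ofs) v = pooled (facts r) (cluster r v) \<and>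
     collected_at (r * round_len (card V) N + ofs) v = pooled (facts r) (cluster r v) \<union>
       {Nb r v (cname r v) u (cname r u) | u. E v u \<and> (\<exists>o'<ofs. bit_slot u o' \<and> \<not> bit_slot v o')}"
proof (induction ofs)
  case 0 then show ?case using rs by (simp add: round_start_def)
next
  case (Suc k)
  define t where "t = r * round_len (card V) N + k"
  have k: "k < 2 * nbits N" using Suc by simp
  have md: "slot_mode (card V) N t = Exchange r (k div 2) (k mod 2)" using slot_mode_Exchange[OF k] by (simp add: t_def)
  show ?case
  proof
    fix v assume v: "v \<in> V"
    have IH: "known_at t v = pooled (facts r) (cluster r v)"
      "collected_at t v = pooled (facts r) (cluster r v) \<union> {Nb r v (cname r v) u (cname r u) | u. E v u \<and> (\<exists>o'<k. bit_slot u o' \<and> \<not> bit_slot v o')}"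
      using Suc k v by (auto simp: t_def)
    have known: "known_at (Suc t) v = known_at t v" using commit_Exchange[OF md] by (simp add: known_at_Suc)
    have tx: "u \<in> transmitters t v \<longleftrightarrow> u \<in> V \<and> E v u \<and> bit_slot u k" for u
      using act_Exchange[OF md, of u] by (auto simp: transmitters_def bit_slot_def)
    have gn: "u \<in> V \<Longrightarrow> group_name (known_at t u) = cname r u" for u
      using Suc k by (auto simp: t_def group_name_cluster)
    have "collected_at (Suc t) v = pooled (facts r) (cluster r v) \<union> {Nb r v (cname r v) u (cname r u) | u. E v u \<and> (\<exists>o'<Suc k. bit_slot u o' \<and> \<not> bit_slot v o')}"
    proof (cases "bit_slot v k")
      case True
      then have "act (cfg t v) \<noteq> Listen" using act_Exchange[OF md, of v] by (simp add: bit_slot_def)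
      then have "collected_at (Suc t) v = collected_at t v" by (rule collected_at_nolisten)
      moreover have "(\<exists>o'<Suc k. bit_slot u o' \<and> \<not> bit_slot v o') \<longleftrightarrow> (\<exists>o'<k. bit_slot u o' \<and> \<not> bit_slot v o')" for u
        using True less_Suc_eq by auto
      ultimately show ?thesis using IH by simp
    next
      case False
      then have L: "act (cfg t v) = Listen" using act_Exchange[OF md, of v] by (simp add: bit_slot_def)
      have "collected_at (Suc t) v = collected_at t v \<union> (\<lambda>u. Nb r v (group_name (known_at t v)) u (group_name (known_at t u))) ` transmitters t v"
        using L md by (simp add: collected_at_Suc)
      also have "(\<lambda>u. Nb r v (group_name (known_at t v)) u (group_name (known_at t u))) ` transmitters t v
          = {Nb r v (cname r v) u (cname r u) | u. E v u \<and> bit_slot u k}"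
        using tx gn v edge_in_V by (auto simp: group_name_cluster IH(1))
      finally show ?thesis using IH False less_Suc_eq by auto
    qed
    then show "known_at (r * round_len (card V) N + Suc k) v = pooled (facts r) (cluster r v) \<and>
      collected_at (r * round_len (card V) N + Suc k) v = pooled (facts r) (cluster r v) \<union>
       {Nb r v (cname r v) u (cname r u) | u. E v u \<and> (\<exists>o'<Suc k. bit_slot u o' \<and> \<not> bit_slot v o')}"
      using known IH(1) by (simp add: t_def)
  qed
qed

lemma exchange_result:
  assumes rs: "round_start r" and v: "v \<in> V"
  shows "known_at (seg_start r 0) v = pooled (facts r) (cluster r v)"
    "collected_at (seg_start r 0) v = pooled (facts r) (cluster r v) \<union> nbr_facts (cluster r) r v"
proof -
  have "{Nb r v (cname r v) u (cname r u) | u. E v u \<and> (\<exists>o'<2 * nbits N. bit_slot u o' \<and> \<not> bit_slot v o')} = nbr_facts (cluster r) r v"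
  proof -
    have "(\<exists>o'<2 * nbits N. bit_slot u o' \<and> \<not> bit_slot v o')" if e: "E v u" for u
    proof -
      have uv: "u \<noteq> v" "u \<in> V" using e Eirr edge_in_V by blast+
      obtain b where b: "b < nbits N" "(u div 2 ^ b) mod 2 \<noteq> (v div 2 ^ b) mod 2"
        using bits_differ[OF uv(1) V_lt_pow[OF uv(2)] V_lt_pow[OF v]] by blast
      define o' where "o' = 2 * b + (u div 2 ^ b) mod 2"
      have "o' div 2 = b" "o' mod 2 = (u div 2 ^ b) mod 2" by (simp_all add: o'_def)
      then have "bit_slot u o'" "\<not> bit_slot v o'" using b(2) by (simp_all add: bit_slot_def)
      moreover have "o' < 2 * nbits N" using b(1) by (simp add: o'_def)
      ultimately show ?thesis by blast
    qed
    then show ?thesis by (auto simp: nbr_facts_def cname_def)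
  qed
  then show "known_at (seg_start r 0) v = pooled (facts r) (cluster r v)"
    "collected_at (seg_start r 0) v = pooled (facts r) (cluster r v) \<union> nbr_facts (cluster r) r v"
    using exchange_phase[OF rs, of "2 * nbits N"] v by (simp_all add: seg_start_def)
qed

lemma pooled_Un: "pooled f (A \<union> B) = pooled f A \<union> pooled f B" by (auto simp: pooled_def)
lemma pooled_Union: "pooled f (\<Union>S) = (\<Union>X\<in>S. pooled f X)" by (auto simp: pooled_def)
lemma pooled_mono: "A \<subseteq> B \<Longrightarrow> pooled f A \<subseteq> pooled f B" by (auto simp: pooled_def)

lemma seg_start_Suc_sg: "seg_start r (Suc sg) = Suc (seg_start r sg) + 2 * card V"
  by (simp add: seg_start_def sweep_len_def)

lemma seg_start_end: "seg_start r (2 * nbits N + 1) = Suc r * round_len (card V) N"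
  by (simp add: seg_start_def round_len_def)

lemma segment_sweep:
  fixes KG :: "nat \<Rightarrow> fact set" and g :: "nat \<Rightarrow> nat set"
  assumes sg: "sg < 2 * nbits N + 1"
    and known_start: "\<forall>v\<in>V. known_at (Suc (seg_start r sg)) v = KG v"
    and g_part: "is_partition V g"
    and KG_members: "\<forall>v\<in>V. members (KG v) = g v \<and> group_name (KG v) = Min (g v)"
    and KG_const: "\<forall>v\<in>V. \<forall>y\<in>g v. KG y = KG v"
    and KG_reach: "\<forall>v\<in>V. \<forall>x\<in>g v. (known_adj (KG v))\<^sup>*\<^sup>* (Min (g v)) x"
    and KG_edges: "\<forall>v a b. v \<in> V \<longrightarrow> known_adj (KG v) a b \<longrightarrow> E a b"
  shows "\<forall>v\<in>V. collected_at (seg_start r (Suc sg)) v = (\<Union>x\<in>g v. collected_at (Suc (seg_start r sg)) x)"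
    and "\<forall>v\<in>V. known_at (seg_start r (Suc sg)) v = (if even sg then collected_at (seg_start r (Suc sg)) v else KG v)"
proof -
  define ts where "ts = Suc (seg_start r sg)"
  have slots: "\<forall>w<2 * card V. slot_mode (card V) N (ts + w) = Sweep r sg w"
    using slot_mode_Sweep[OF sg] by (simp add: ts_def seg_start_def)
  have nc: "\<not> commit (card V) N (ts + w)" if "w + 1 < 2 * card V" for w
    using commit_Sweep[OF slots[rule_format, of w]] that by simp
  have known_const: "\<forall>w<2 * card V. \<forall>v\<in>V. known_at (ts + w) v = KG v"
  proof (intro allI impI ballI)
    fix w v assume w: "w < 2 * card V" and v: "v \<in> V"
    have "known_at (ts + w) v = known_at ts v" using nc w by (intro known_at_const) simp
    then show "known_at (ts + w) v = KG v" using known_start v by (simp add: ts_def)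
  qed
  have sw: "\<forall>v\<in>V. collected_at (ts + 2 * card V) v = (\<Union>x\<in>g v. collected_at ts x)"
    by (rule sweep_gathers[OF slots known_const g_part KG_members KG_const KG_reach KG_edges])
  then show "\<forall>v\<in>V. collected_at (seg_start r (Suc sg)) v = (\<Union>x\<in>g v. collected_at (Suc (seg_start r sg)) x)"
    by (simp add: seg_start_Suc_sg ts_def)
  have two: "2 \<le> card V" by (rule two)
  define w0 where "w0 = 2 * card V - 1"
  have w0: "w0 < 2 * card V" "ts + 2 * card V = Suc (ts + w0)" using two by (auto simp: w0_def)
  have cm: "commit (card V) N (ts + w0) \<longleftrightarrow> even sg" using commit_Sweep[OF slots[rule_format, OF w0(1)]] two
    by (auto simp: w0_def)
  show "\<forall>v\<in>V. known_at (seg_start r (Suc sg)) v = (if even sg then collected_at (seg_start r (Suc sg)) v else KG v)"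
  proof
    fix v assume v: "v \<in> V"
    have "known_at (Suc (ts + w0)) v = (if even sg then collected_at (Suc (ts + w0)) v else known_at (ts + w0) v)"
      using cm by (simp add: known_at_Suc)
    then show "known_at (seg_start r (Suc sg)) v = (if even sg then collected_at (seg_start r (Suc sg)) v else KG v)"
      using known_const w0 v by (simp add: seg_start_Suc_sg ts_def[symmetric])
  qed
qed

lemma pooled_structure:
  assumes g_part: "is_partition V g" and g_conn: "connected_parts V E g" and sing: "0 < r' \<or> (\<forall>v\<in>V. g v = {v})"
  shows "\<forall>v\<in>V. members (pooled (facts r') (g v)) = g v \<and> group_name (pooled (facts r') (g v)) = Min (g v)"
    and "\<forall>v\<in>V. \<forall>y\<in>g v. pooled (facts r') (g y) = pooled (facts r') (g v)"
    and "\<forall>v\<in>V. \<forall>x\<in>g v. (known_adj (pooled (facts r') (g v)))\<^sup>*\<^sup>* (Min (g v)) x"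
    and "\<forall>v a b. v \<in> V \<longrightarrow> known_adj (pooled (facts r') (g v)) a b \<longrightarrow> E a b"
proof -
  show "\<forall>v\<in>V. members (pooled (facts r') (g v)) = g v \<and> group_name (pooled (facts r') (g v)) = Min (g v)"
    by (simp add: members_pooled group_name_pooled)
  show "\<forall>v\<in>V. \<forall>y\<in>g v. pooled (facts r') (g y) = pooled (facts r') (g v)"
    using is_partition_same[OF g_part] by metis
  show "\<forall>v a b. v \<in> V \<longrightarrow> known_adj (pooled (facts r') (g v)) a b \<longrightarrow> E a b"
    by (simp add: known_adj_pooled)
  show "\<forall>v\<in>V. \<forall>x\<in>g v. (known_adj (pooled (facts r') (g v)))\<^sup>*\<^sup>* (Min (g v)) x"
  proof (intro ballI)
    fix v x assume v: "v \<in> V" and x: "x \<in> g v"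
    show "(known_adj (pooled (facts r') (g v)))\<^sup>*\<^sup>* (Min (g v)) x"
    proof (cases "0 < r'")
      case True
      have "(\<lambda>a b. E a b \<and> a \<in> g v \<and> b \<in> g v)\<^sup>*\<^sup>* (Min (g v)) x"
        using g_conn v x is_partition_Min_in[OF g_part v] unfolding connected_parts_def by blast
      then show ?thesis
        by (rule rtranclp_mono[THEN predicate2D, rotated]) (auto simp: known_adj_pooled True)
    next
      case False
      then have "g v = {v}" using sing v by blast
      then show ?thesis using x by simp
    qed
  qed
qed

lemma first_segment:
  assumes rs: "round_start r"
  shows "\<forall>v\<in>V. known_at (seg_start r 1) v = pooled (facts (Suc r)) (cluster r v) \<and> collected_at (seg_start r 1) v = pooled (facts (Suc r)) (cluster r v)"
proof -
  have sg: "0 < 2 * nbits N + 1" by simp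
  have md: "slot_mode (card V) N (seg_start r 0) = Handshake r 0" using slot_mode_Handshake[OF sg] by (simp add: seg_start_def)
  have idle: "act (cfg (seg_start r 0) v) = Idle" for v using md by (simp add: act_def Let_def)
  have K0: "known_at (Suc (seg_start r 0)) v = known_at (seg_start r 0) v" for v
    using commit_Handshake[OF md] by (simp add: known_at_Suc)
  have A0: "collected_at (Suc (seg_start r 0)) v = collected_at (seg_start r 0) v" for v using idle collected_at_nolisten by simp
  have sing: "0 < r \<or> (\<forall>v\<in>V. cluster r v = {v})" by (cases r) (auto simp: cluster_0)
  note S = pooled_structure[OF cluster_partition cluster_connected sing]
  have K0': "\<forall>v\<in>V. known_at (Suc (seg_start r 0)) v = pooled (facts r) (cluster r v)" using K0 exchange_result(1)[OF rs] by simp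
  note sw = segment_sweep[OF sg K0' cluster_partition S]
  show ?thesis
  proof
    fix v assume v: "v \<in> V"
    have "collected_at (seg_start r 1) v = (\<Union>x\<in>cluster r v. collected_at (Suc (seg_start r 0)) x)" using sw(1) v by simp
    also have "\<dots> = (\<Union>x\<in>cluster r v. pooled (facts r) (cluster r x) \<union> nbr_facts (cluster r) r x)"
      using A0 exchange_result(2)[OF rs] cluster_sameD[OF v] by auto
    also have "\<dots> = (\<Union>x\<in>cluster r v. pooled (facts r) (cluster r v) \<union> nbr_facts (cluster r) r x)"
      using cluster_sameD[OF v] by (intro SUP_cong) auto
    also have "\<dots> = pooled (facts (Suc r)) (cluster r v)"
      using cluster_self[OF v] by (auto simp: pooled_def facts_Suc)
    finally have "collected_at (seg_start r 1) v = pooled (facts (Suc r)) (cluster r v)" .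
    moreover have "known_at (seg_start r 1) v = collected_at (seg_start r 1) v" using sw(2) v by simp
    ultimately show "known_at (seg_start r 1) v = pooled (facts (Suc r)) (cluster r v) \<and> collected_at (seg_start r 1) v = pooled (facts (Suc r)) (cluster r v)"
      by simp
  qed
qed

section \<open>Merge sub-phases\<close>

definition attached_facts :: "nat \<Rightarrow> (nat \<Rightarrow> nat set) \<Rightarrow> nat \<Rightarrow> nat \<Rightarrow> fact set" where
  "attached_facts r g j x = pooled (facts (Suc r)) (g x) \<union>
     (\<Union>{pooled (facts (Suc r)) (g u) | u. u \<in> V \<and> is_leaf r g j u \<and> snd (leaf_edge r g j u) \<in> g x})"

lemma attached_facts_nonleaf:
  assumes inv: "merge_inv r j g" and w: "w \<in> V" "\<not> is_leaf r g j w"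
  shows "attached_facts r g j w = pooled (facts (Suc r)) (merge_step (facts (Suc r)) r j g w)"
proof -
  note P = cluster_partition[of r] cluster_connected[of r]
  have "merge_step (facts (Suc r)) r j g w = g w \<union> \<Union>{g u | u. u \<in> V \<and> is_leaf r g j u \<and> snd (leaf_edge r g j u) \<in> g w}"
    using merge_step_eq[OF P inv, of w] hub_def[OF P inv, of w] w(2) by simp
  then show ?thesis unfolding attached_facts_def by (auto simp: pooled_Un pooled_Union)
qed

lemma attached_facts_leaf:
  assumes inv: "merge_inv r j g" and w: "w \<in> V" "is_leaf r g j w"
  shows "attached_facts r g j w = pooled (facts (Suc r)) (g w)"
proof -
  note P = cluster_partition[of r] cluster_connected[of r]
  have "\<not> (u \<in> V \<and> is_leaf r g j u \<and> snd (leaf_edge r g j u) \<in> g w)" for u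
  proof
    assume u: "u \<in> V \<and> is_leaf r g j u \<and> snd (leaf_edge r g j u) \<in> g w"
    then have "is_leaf r g j (snd (leaf_edge r g j u)) = is_leaf r g j w"
      using cluster_const[OF P inv w(1)] by blast
    then show False using center_nonleaf[OF P inv] u w by blast
  qed
  then show ?thesis unfolding attached_facts_def by auto
qed

lemma subphase_pooling:
  assumes inv: "merge_inv r j g"
  defines "Y \<equiv> attached_facts r g j"
  assumes v: "v \<in> V"
  shows "(\<Union>x\<in>g v. Y x \<union> (if is_leaf r g j x \<and> fst (leaf_edge r g j x) = x then Y (snd (leaf_edge r g j x)) else {}))
     = pooled (facts (Suc r)) (merge_step (facts (Suc r)) r j g v)"
proof -
  note P = cluster_partition[of r] cluster_connected[of r]
  have gp': "is_partition V g" using inv_partition[OF P inv] .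
  have const: "y \<in> g w \<Longrightarrow> w \<in> V \<Longrightarrow> is_leaf r g j y = is_leaf r g j w \<and> leaf_edge r g j y = leaf_edge r g j w \<and> y \<in> V \<and> g y = g w" for y w
    using cluster_const[OF P inv] by blast
  note Ynl = attached_facts_nonleaf[OF inv, folded Y_def]
  note Yl = attached_facts_leaf[OF inv, folded Y_def]
  have sub': "g w \<subseteq> merge_step (facts (Suc r)) r j g w" if "w \<in> V" for w using g_sub_g'[OF P inv that] .
  show ?thesis
  proof (cases "is_leaf r g j v")
    case False
    have "\<forall>x\<in>g v. Y x \<union> (if is_leaf r g j x \<and> fst (leaf_edge r g j x) = x then Y (snd (leaf_edge r g j x)) else {})
          = pooled (facts (Suc r)) (merge_step (facts (Suc r)) r j g v)"
    proof
      fix x assume x: "x \<in> g v"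
      have c: "is_leaf r g j x = is_leaf r g j v" "x \<in> V" "g x = g v" using const[OF x v] by auto
      have "Y x = pooled (facts (Suc r)) (merge_step (facts (Suc r)) r j g x)" using Ynl c False by simp
      moreover have "merge_step (facts (Suc r)) r j g x = merge_step (facts (Suc r)) r j g v"
        using g'_same[OF P inv v] sub'[OF v] x by blast
      ultimately show "Y x \<union> (if is_leaf r g j x \<and> fst (leaf_edge r g j x) = x then Y (snd (leaf_edge r g j x)) else {})
          = pooled (facts (Suc r)) (merge_step (facts (Suc r)) r j g v)" using c False by simp
    qed
    moreover have "g v \<noteq> {}" using is_partition_Min_in[OF gp' v] by blast
    ultimately show ?thesis by simp
  next
    case True
    define c where "c = fst (leaf_edge r g j v)"
    define y0 where "y0 = snd (leaf_edge r g j v)"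
    have cg: "c \<in> g v" and y0V: "y0 \<in> V" using leaf_edge_facts[OF P inv v True] by (auto simp: c_def y0_def)
    have cc: "is_leaf r g j c" "leaf_edge r g j c = leaf_edge r g j v" "c \<in> V" using const[OF cg v] True by auto
    have y0nl: "\<not> is_leaf r g j y0" using center_nonleaf[OF P inv v True] by (simp add: y0_def)
    have Hv: "hub r g j v = g y0" using hub_def[OF P inv, of v] True by (simp add: y0_def)
    have Hy: "hub r g j y0 = g y0" using hub_def[OF P inv, of y0] y0nl by simp
    have gg: "merge_step (facts (Suc r)) r j g y0 = merge_step (facts (Suc r)) r j g v"
      using merge_step_eq[OF P inv, of v] merge_step_eq[OF P inv, of y0] Hv Hy by simp
    have Yy0: "Y y0 = pooled (facts (Suc r)) (merge_step (facts (Suc r)) r j g v)" using Ynl[OF y0V y0nl] gg by simp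
    have each: "Y x \<union> (if is_leaf r g j x \<and> fst (leaf_edge r g j x) = x then Y (snd (leaf_edge r g j x)) else {})
        = pooled (facts (Suc r)) (g v) \<union> (if x = c then pooled (facts (Suc r)) (merge_step (facts (Suc r)) r j g v) else {})"
      if x: "x \<in> g v" for x
    proof -
      have cx: "is_leaf r g j x" "leaf_edge r g j x = leaf_edge r g j v" "x \<in> V" "g x = g v" using const[OF x v] True by auto
      have "Y x = pooled (facts (Suc r)) (g v)" using Yl[OF cx(3) cx(1)] cx(4) by simp
      moreover have "(is_leaf r g j x \<and> fst (leaf_edge r g j x) = x) \<longleftrightarrow> x = c" using cx by (auto simp: c_def)
      ultimately show ?thesis using cx(2) Yy0 cc(2) by (auto simp: y0_def)
    qed
    have "(\<Union>x\<in>g v. Y x \<union> (if is_leaf r g j x \<and> fst (leaf_edge r g j x) = x then Y (snd (leaf_edge r g j x)) else {}))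
        = (\<Union>x\<in>g v. pooled (facts (Suc r)) (g v) \<union> (if x = c then pooled (facts (Suc r)) (merge_step (facts (Suc r)) r j g v) else {}))"
      using each by (intro SUP_cong) auto
    also have "\<dots> = pooled (facts (Suc r)) (g v) \<union> pooled (facts (Suc r)) (merge_step (facts (Suc r)) r j g v)"
      using cg by auto
    also have "\<dots> = pooled (facts (Suc r)) (merge_step (facts (Suc r)) r j g v)"
      using pooled_mono[OF sub'[OF v]] by blast
    finally show ?thesis .
  qed
qed

definition holds_pool :: "nat \<Rightarrow> (nat \<Rightarrow> fact set) \<Rightarrow> (nat \<Rightarrow> nat set) \<Rightarrow> bool" where
  "holds_pool t f g = (\<forall>v\<in>V. known_at t v = pooled f (g v) \<and> collected_at t v = pooled f (g v))"

context
  fixes r j :: nat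
  assumes j: "j < nbits N"
    and subphase_start:
      "holds_pool (seg_start r (2 * j + 1)) (facts (Suc r)) (merge_steps (facts (Suc r)) r (cluster r) j)"
begin

definition sub_parts :: "nat \<Rightarrow> nat set" where
  "sub_parts = merge_steps (facts (Suc r)) r (cluster r) j"

definition sub_pool :: "nat \<Rightarrow> fact set" where
  "sub_pool v = pooled (facts (Suc r)) (sub_parts v)"

definition handshake1 :: nat where "handshake1 = seg_start r (2 * j + 1)"
definition handshake2 :: nat where "handshake2 = seg_start r (2 * j + 2)"

lemma sub_inv: "merge_inv r j sub_parts"
  unfolding sub_parts_def by (rule merge_inv_merge_steps[OF cluster_partition cluster_connected])

lemmas sub_parts_partition = inv_partition[OF cluster_partition cluster_connected sub_inv]
lemmas sub_parts_connected = inv_connected[OF cluster_partition cluster_connected sub_inv]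
lemmas sub_pool_structure = pooled_structure[OF sub_parts_partition sub_parts_connected
    disjI1[OF zero_less_Suc[of r]], folded sub_pool_def]
lemmas sub_is_leaf_def = is_leaf_def[OF cluster_partition cluster_connected sub_inv]
lemmas sub_leaf_edge_def = leaf_edge_def[OF cluster_partition cluster_connected sub_inv]
lemmas sub_leaf_edge_facts = leaf_edge_facts[OF cluster_partition cluster_connected sub_inv]
lemmas sub_center_nonleaf = center_nonleaf[OF cluster_partition cluster_connected sub_inv]

abbreviation leaf_sends :: "nat \<Rightarrow> bool" where
  "leaf_sends u \<equiv> is_leaf r sub_parts j u \<and> fst (leaf_edge r sub_parts j u) = u"

lemma sub_parts_const:
  "y \<in> sub_parts w \<Longrightarrow> w \<in> V \<Longrightarrow> is_leaf r sub_parts j y = is_leaf r sub_parts j w \<and>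
     leaf_edge r sub_parts j y = leaf_edge r sub_parts j w \<and> y \<in> V \<and> sub_parts y = sub_parts w"
  using cluster_const[OF cluster_partition cluster_connected sub_inv] by blast

lemma is_leaf_endpoint_sub_pool: "is_leaf_endpoint (sub_pool u) r j u \<longleftrightarrow> leaf_sends u"
  by (simp add: is_leaf_endpoint_def sub_pool_def sub_is_leaf_def sub_leaf_edge_def)

lemma known_leaf_edge_sub_pool: "known_leaf_edge (sub_pool u) r j = leaf_edge r sub_parts j u"
  by (simp add: sub_pool_def sub_leaf_edge_def)

lemma handshake1_mode: "slot_mode (card V) N handshake1 = Handshake r (2 * j + 1)"
  using slot_mode_Handshake[of "2 * j + 1"] j by (simp add: handshake1_def seg_start_def)

lemma handshake2_mode: "slot_mode (card V) N handshake2 = Handshake r (2 * j + 2)"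
  using slot_mode_Handshake[of "2 * j + 2"] j by (simp add: handshake2_def seg_start_def)

lemma handshake1_state: "\<forall>v\<in>V. known_at handshake1 v = sub_pool v \<and> collected_at handshake1 v = sub_pool v"
  using subphase_start by (simp add: holds_pool_def handshake1_def sub_pool_def sub_parts_def)

text \<open>First handshake: the endpoint of each leaf's chosen edge sends its part's knowledge across
  the edge to the hub.\<close>

lemma act_handshake1:
  "v \<in> V \<Longrightarrow> act (cfg handshake1 v) = (if leaf_sends v then Transmit (cfg handshake1 v) else Listen)"
  using subphase_of_odd[of j] handshake1_mode handshake1_state is_leaf_endpoint_sub_pool[of v]
  by (simp add: act_def Let_def)

lemma accepted_handshake1:
  assumes v: "v \<in> V" and listen: "\<not> leaf_sends v"
  shows "u \<in> accepted handshake1 v \<longleftrightarrow> u \<in> V \<and> leaf_sends u \<and> snd (leaf_edge r sub_parts j u) = v"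
proof -
  have "u \<in> accepted handshake1 v \<longleftrightarrow> u \<in> V \<and> E v u \<and> is_transmit (act (cfg handshake1 u)) \<and>
      is_leaf_endpoint (sub_pool u) r j u \<and> snd (known_leaf_edge (sub_pool u) r j) = v"
    using subphase_of_odd[of j] handshake1_mode handshake1_state v
    by (auto simp: accepted_def transmitters_def accepts_def Let_def)
  moreover have "u \<in> V \<Longrightarrow> is_transmit (act (cfg handshake1 u)) \<longleftrightarrow> leaf_sends u"
    using act_handshake1 by simp
  moreover have "u \<in> V \<Longrightarrow> leaf_sends u \<Longrightarrow> snd (leaf_edge r sub_parts j u) = v \<Longrightarrow> E v u"
    using sub_leaf_edge_facts[of u] Esym by metis
  ultimately show ?thesis by (auto simp: is_leaf_endpoint_sub_pool known_leaf_edge_sub_pool)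
qed

lemma collected_after_handshake1:
  assumes v: "v \<in> V"
  shows "collected_at (Suc handshake1) v
    = sub_pool v \<union> (\<Union>{sub_pool u | u. u \<in> V \<and> leaf_sends u \<and> snd (leaf_edge r sub_parts j u) = v})"
proof (cases "leaf_sends v")
  case True
  have "\<not> (u \<in> V \<and> leaf_sends u \<and> snd (leaf_edge r sub_parts j u) = v)" for u
    using sub_center_nonleaf[of u] True by auto
  then have none: "{sub_pool u | u. u \<in> V \<and> leaf_sends u \<and> snd (leaf_edge r sub_parts j u) = v} = {}"
    by blast
  have "collected_at (Suc handshake1) v = sub_pool v"
    using collected_at_nolisten[of handshake1 v] act_handshake1[OF v] True handshake1_state v by simp
  then show ?thesis unfolding none by simp
next
  case False
  have "act (cfg handshake1 v) = Listen" using act_handshake1[OF v] False by simp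
  then have "collected_at (Suc handshake1) v
      = collected_at handshake1 v \<union> (\<Union>u\<in>accepted handshake1 v. collected_at handshake1 u)"
    using handshake1_mode by (simp add: collected_at_Suc)
  also have "\<dots> = sub_pool v \<union> (\<Union>u\<in>accepted handshake1 v. sub_pool u)"
  proof -
    have "(\<Union>u\<in>accepted handshake1 v. collected_at handshake1 u) = (\<Union>u\<in>accepted handshake1 v. sub_pool u)"
      using handshake1_state accepted_handshake1[OF v False] by (intro SUP_cong) auto
    then show ?thesis using handshake1_state v by simp
  qed
  also have "\<dots> = sub_pool v \<union> (\<Union>{sub_pool u | u. u \<in> V \<and> leaf_sends u \<and> snd (leaf_edge r sub_parts j u) = v})"
  proof -
    have "accepted handshake1 v = {u. u \<in> V \<and> leaf_sends u \<and> snd (leaf_edge r sub_parts j u) = v}"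
      using accepted_handshake1[OF v False] by blast
    then show ?thesis by blast
  qed
  finally show ?thesis .
qed

lemma handshake1_segment: "2 * j + 1 < 2 * nbits N + 1" using j by simp

lemmas sweep_after_handshake1 = segment_sweep[where sg = "2 * j + 1" and r = r and KG = sub_pool and g = sub_parts,
    OF handshake1_segment _ sub_parts_partition sub_pool_structure, folded handshake1_def]

lemma leaf_parts_reach_hub:
  "(\<Union>{sub_pool u | u. u \<in> V \<and> leaf_sends u \<and> snd (leaf_edge r sub_parts j u) \<in> sub_parts v})
    = (\<Union>{sub_pool u | u. u \<in> V \<and> is_leaf r sub_parts j u \<and> snd (leaf_edge r sub_parts j u) \<in> sub_parts v})"
proof -
  have "(\<exists>u. X = sub_pool u \<and> u \<in> V \<and> leaf_sends u \<and> snd (leaf_edge r sub_parts j u) \<in> sub_parts v)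
      \<longleftrightarrow> (\<exists>u. X = sub_pool u \<and> u \<in> V \<and> is_leaf r sub_parts j u \<and> snd (leaf_edge r sub_parts j u) \<in> sub_parts v)" for X
  proof
    assume "\<exists>u. X = sub_pool u \<and> u \<in> V \<and> is_leaf r sub_parts j u \<and> snd (leaf_edge r sub_parts j u) \<in> sub_parts v"
    then obtain u where u: "X = sub_pool u" "u \<in> V" "is_leaf r sub_parts j u" "snd (leaf_edge r sub_parts j u) \<in> sub_parts v"
      by blast
    define c where "c = fst (leaf_edge r sub_parts j u)"
    have "c \<in> sub_parts u" using sub_leaf_edge_facts[OF u(2,3)] by (simp add: c_def)
    from sub_parts_const[OF this u(2)]
    have "is_leaf r sub_parts j c" "leaf_edge r sub_parts j c = leaf_edge r sub_parts j u"
      "c \<in> V" "sub_pool c = sub_pool u"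
      using u(3) by (auto simp: sub_pool_def)
    then have "X = sub_pool c \<and> c \<in> V \<and> leaf_sends c \<and> snd (leaf_edge r sub_parts j c) \<in> sub_parts v"
      using u(1,4) by (simp add: c_def)
    then show "\<exists>u. X = sub_pool u \<and> u \<in> V \<and> leaf_sends u \<and> snd (leaf_edge r sub_parts j u) \<in> sub_parts v" ..
  qed blast
  then show ?thesis by (intro arg_cong[where f = Union] Collect_cong)
qed

lemma handshake2_collected:
  assumes v: "v \<in> V"
  shows "collected_at handshake2 v = attached_facts r sub_parts j v"
proof -
  have known: "\<forall>v\<in>V. known_at (Suc handshake1) v = sub_pool v"
    using handshake1_state commit_Handshake[OF handshake1_mode] by (simp add: known_at_Suc)
  have "collected_at handshake2 v = (\<Union>x\<in>sub_parts v. collected_at (Suc handshake1) x)"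
    using sweep_after_handshake1(1)[OF known] v
    by (simp add: handshake1_def handshake2_def)
  also have "\<dots> = (\<Union>x\<in>sub_parts v. sub_pool v \<union>
      \<Union>{sub_pool u | u. u \<in> V \<and> leaf_sends u \<and> snd (leaf_edge r sub_parts j u) = x})"
  proof (rule SUP_cong)
    fix x assume "x \<in> sub_parts v"
    then have "x \<in> V" "sub_pool x = sub_pool v" using sub_parts_const sub_pool_structure(2) v by blast+
    then show "collected_at (Suc handshake1) x = sub_pool v \<union>
        \<Union>{sub_pool u | u. u \<in> V \<and> leaf_sends u \<and> snd (leaf_edge r sub_parts j u) = x}"
      using collected_after_handshake1 by simp
  qed simp
  also have "\<dots> = sub_pool v \<union> (\<Union>{sub_pool u | u. u \<in> V \<and> leaf_sends u \<and> snd (leaf_edge r sub_parts j u) \<in> sub_parts v})"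
  proof (rule set_eqI)
    fix z
    have ne: "sub_parts v \<noteq> {}" using is_partition_Min_in[OF sub_parts_partition v] by blast
    have in_union: "z \<in> \<Union>{sub_pool u | u. Q u} \<longleftrightarrow> (\<exists>u. Q u \<and> z \<in> sub_pool u)" for Q by blast
    show "z \<in> (\<Union>x\<in>sub_parts v. sub_pool v \<union>
          \<Union>{sub_pool u | u. u \<in> V \<and> leaf_sends u \<and> snd (leaf_edge r sub_parts j u) = x}) \<longleftrightarrow>
        z \<in> sub_pool v \<union> (\<Union>{sub_pool u | u. u \<in> V \<and> leaf_sends u \<and> snd (leaf_edge r sub_parts j u) \<in> sub_parts v})"
      unfolding UN_iff Un_iff in_union using ne by blast
  qed
  also have "\<dots> = attached_facts r sub_parts j v"
    unfolding leaf_parts_reach_hub by (simp add: attached_facts_def sub_pool_def)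
  finally show ?thesis .
qed

lemma handshake2_known: "\<forall>v\<in>V. known_at handshake2 v = sub_pool v"
proof -
  have "\<forall>v\<in>V. known_at (Suc handshake1) v = sub_pool v"
    using handshake1_state commit_Handshake[OF handshake1_mode] by (simp add: known_at_Suc)
  then show ?thesis
    using sweep_after_handshake1(2) by (simp add: handshake2_def)
qed

text \<open>Second handshake: the hub endpoint answers, so the leaf endpoint learns everything the hub's
  star has gathered.\<close>

lemma act_handshake2:
  "v \<in> V \<Longrightarrow> act (cfg handshake2 v) = (if leaf_sends v then Listen else Transmit (cfg handshake2 v))"
  using subphase_of_even[of j] handshake2_mode handshake2_known is_leaf_endpoint_sub_pool[of v]
  by (simp add: act_def Let_def)

lemma collected_after_handshake2:
  assumes v: "v \<in> V"
  shows "collected_at (Suc handshake2) v = attached_facts r sub_parts j v \<union>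
    (if leaf_sends v then attached_facts r sub_parts j (snd (leaf_edge r sub_parts j v)) else {})"
proof (cases "leaf_sends v")
  case False
  then have "act (cfg handshake2 v) \<noteq> Listen" using act_handshake2[OF v] by simp
  then have "collected_at (Suc handshake2) v = attached_facts r sub_parts j v"
    using collected_at_nolisten[of handshake2 v] handshake2_collected[OF v] by simp
  then show ?thesis by (simp only: if_not_P[OF False] Un_empty_right)
next
  case True
  define y0 where "y0 = snd (leaf_edge r sub_parts j v)"
  have y0: "y0 \<in> V" "E v y0" using sub_leaf_edge_facts[OF v] True by (auto simp: y0_def)
  have y0nl: "\<not> is_leaf r sub_parts j y0" using sub_center_nonleaf[OF v] True by (simp add: y0_def)
  have "u \<in> accepted handshake2 v \<longleftrightarrow> u = y0" for u
  proof -
    have "u \<in> accepted handshake2 v \<longleftrightarrow>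
        u \<in> V \<and> E v u \<and> is_transmit (act (cfg handshake2 u)) \<and> u = snd (known_leaf_edge (sub_pool v) r j)"
      using subphase_of_even[of j] handshake2_mode handshake2_known v
      by (auto simp: accepted_def transmitters_def accepts_def Let_def)
    moreover have "is_transmit (act (cfg handshake2 y0))" using act_handshake2[OF y0(1)] y0nl by simp
    ultimately show ?thesis using y0 known_leaf_edge_sub_pool by (auto simp: y0_def)
  qed
  then have "accepted handshake2 v = {y0}" by blast
  moreover have "act (cfg handshake2 v) = Listen" using act_handshake2[OF v] True by simp
  ultimately have "collected_at (Suc handshake2) v = collected_at handshake2 v \<union> collected_at handshake2 y0"
    using handshake2_mode by (simp add: collected_at_Suc)
  then show ?thesis using handshake2_collected v y0(1) True by (simp add: y0_def)
qed

lemma merge_subphase: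
  "holds_pool (seg_start r (2 * j + 3)) (facts (Suc r)) (merge_steps (facts (Suc r)) r (cluster r) (Suc j))"
  unfolding holds_pool_def
proof
  fix v assume v: "v \<in> V"
  have j': "2 * j + 2 < 2 * nbits N + 1" using j by simp
  have "\<forall>v\<in>V. known_at (Suc handshake2) v = sub_pool v"
    using handshake2_known commit_Handshake[OF handshake2_mode] by (simp add: known_at_Suc)
  note sweep = segment_sweep[where r = r and KG = sub_pool and g = sub_parts,
      OF j' _ sub_parts_partition sub_pool_structure, folded handshake2_def, OF this]
  have next_start: "seg_start r (Suc (2 * j + 2)) = seg_start r (2 * j + 3)" by (simp add: numeral_3_eq_3)
  have "collected_at (seg_start r (2 * j + 3)) v = (\<Union>x\<in>sub_parts v. collected_at (Suc handshake2) x)"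
    using sweep(1) v next_start by simp
  also have "\<dots> = (\<Union>x\<in>sub_parts v. attached_facts r sub_parts j x \<union>
      (if leaf_sends x then attached_facts r sub_parts j (snd (leaf_edge r sub_parts j x)) else {}))"
  proof (rule SUP_cong)
    fix x assume "x \<in> sub_parts v"
    then have "x \<in> V" using sub_parts_const v by blast
    then show "collected_at (Suc handshake2) x = attached_facts r sub_parts j x \<union>
        (if leaf_sends x then attached_facts r sub_parts j (snd (leaf_edge r sub_parts j x)) else {})"
      by (rule collected_after_handshake2)
  qed simp
  also have "\<dots> = pooled (facts (Suc r)) (merge_step (facts (Suc r)) r j sub_parts v)"
    by (rule subphase_pooling[OF sub_inv v])
  finally have "collected_at (seg_start r (2 * j + 3)) v
      = pooled (facts (Suc r)) (merge_steps (facts (Suc r)) r (cluster r) (Suc j) v)"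
    by (simp add: sub_parts_def)
  moreover have "known_at (seg_start r (2 * j + 3)) v = collected_at (seg_start r (2 * j + 3)) v"
    using sweep(2) v next_start by simp
  ultimately show "known_at (seg_start r (2 * j + 3)) v
      = pooled (facts (Suc r)) (merge_steps (facts (Suc r)) r (cluster r) (Suc j) v) \<and>
    collected_at (seg_start r (2 * j + 3)) v
      = pooled (facts (Suc r)) (merge_steps (facts (Suc r)) r (cluster r) (Suc j) v)" by simp
qed

end

lemma round_step:
  assumes rs: "round_start r" shows "round_start (Suc r)"
proof -
  have "holds_pool (seg_start r (2 * j + 1)) (facts (Suc r)) (merge_steps (facts (Suc r)) r (cluster r) j)"
    if "j \<le> nbits N" for j
    using that
  proof (induction j)
    case 0 then show ?case using first_segment[OF rs] by (simp add: holds_pool_def)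
  next
    case (Suc j)
    have e: "2 * Suc j + 1 = 2 * j + 3" by simp
    have j: "j < nbits N" using Suc.prems by simp
    then have "holds_pool (seg_start r (2 * j + 1)) (facts (Suc r)) (merge_steps (facts (Suc r)) r (cluster r) j)"
      using Suc.IH by simp
    then show ?case unfolding e by (rule merge_subphase[OF j])
  qed
  from this[of "nbits N"] show ?thesis
    unfolding round_start_def holds_pool_def seg_start_end cluster_Suc[symmetric] by simp
qed

lemma round_start_all: "round_start r"
  by (induction r) (auto intro: round_step round_start_0)



section \<open>Energy\<close>

definition active_sweep_offsets :: "nat \<Rightarrow> nat \<Rightarrow> nat \<Rightarrow> nat set" where
  "active_sweep_offsets v r sg = {w. w < 2 * card V \<and> sweep_act (card V) w (level (known_at (Suc (seg_start r sg)) v) v) \<noteq> None}"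

definition active_slots :: "nat \<Rightarrow> nat \<Rightarrow> nat set" where
  "active_slots v r = (\<lambda>o'. r * round_len (card V) N + o') ` {..<2 * nbits N} \<union>
     (\<Union>sg<2 * nbits N + 1. insert (seg_start r sg) ((\<lambda>w. Suc (seg_start r sg) + w) ` active_sweep_offsets v r sg))"

lemma active_slots_card: "card (active_slots v r) \<le> 2 * nbits N + (2 * nbits N + 1) * 5"
proof -
  have c1: "card ((\<lambda>o'. r * round_len (card V) N + o') ` {..<2 * nbits N}) \<le> 2 * nbits N"
    using card_image_le[of "{..<2 * nbits N}"] by simp
  have c2: "card (insert (seg_start r sg) ((\<lambda>w. Suc (seg_start r sg) + w) ` active_sweep_offsets v r sg)) \<le> 5" for sg
  proof -
    have "card (insert (seg_start r sg) ((\<lambda>w. Suc (seg_start r sg) + w) ` active_sweep_offsets v r sg))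
        \<le> Suc (card ((\<lambda>w. Suc (seg_start r sg) + w) ` active_sweep_offsets v r sg))" by (rule card_insert_Suc)
    also have "card ((\<lambda>w. Suc (seg_start r sg) + w) ` active_sweep_offsets v r sg) \<le> card (active_sweep_offsets v r sg)"
      by (rule card_image_le) (simp add: active_sweep_offsets_def)
    also have "card (active_sweep_offsets v r sg) \<le> 4" unfolding active_sweep_offsets_def by (rule sweep_act_card)
    finally show ?thesis by simp
  qed
  have "card (\<Union>sg<2 * nbits N + 1. insert (seg_start r sg) ((\<lambda>w. Suc (seg_start r sg) + w) ` active_sweep_offsets v r sg))
      \<le> (\<Sum>sg<2 * nbits N + 1. card (insert (seg_start r sg) ((\<lambda>w. Suc (seg_start r sg) + w) ` active_sweep_offsets v r sg)))"
    by (rule card_UN_le) simp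
  also have "\<dots> \<le> (\<Sum>sg<2 * nbits N + 1. 5)" by (rule sum_mono) (rule c2)
  also have "\<dots> = (2 * nbits N + 1) * 5" by simp
  finally have "card (\<Union>sg<2 * nbits N + 1. insert (seg_start r sg) ((\<lambda>w. Suc (seg_start r sg) + w) ` active_sweep_offsets v r sg)) \<le> (2 * nbits N + 1) * 5" .
  then show ?thesis unfolding active_slots_def using c1 card_Un_le by (meson add_le_mono le_trans)
qed

lemma slot_in_round_cases:
  assumes t1: "r * round_len (card V) N \<le> t" and t2: "t < Suc r * round_len (card V) N"
  obtains (exchange) o' where "o' < 2 * nbits N" "t = r * round_len (card V) N + o'"
    | (segment) sg p where "sg < 2 * nbits N + 1" "p < sweep_len (card V)" "t = seg_start r sg + p"
proof -
  define RL where "RL = round_len (card V) N"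
  define SL where "SL = sweep_len (card V)"
  define L where "L = nbits N"
  define o' where "o' = t - r * RL"
  have t: "t = r * RL + o'" "o' < RL" using t1 t2 by (auto simp: o'_def RL_def)
  show ?thesis
  proof (cases "o' < 2 * L")
    case True
    then show ?thesis using exchange t by (simp add: RL_def L_def)
  next
    case False
    define q where "q = o' - 2 * L"
    have SLp: "0 < SL" by (simp add: SL_def sweep_len_def)
    have q: "q = q div SL * SL + q mod SL" by simp
    have qlt: "q < (2 * L + 1) * SL" using t(2) False by (simp add: q_def RL_def round_len_def L_def SL_def)
    have sg: "q div SL < 2 * L + 1"
    proof (rule ccontr)
      assume "\<not> q div SL < 2 * L + 1"
      then have "(2 * L + 1) * SL \<le> q div SL * SL" by (intro mult_le_mono1) simp
      then show False using q qlt by linarith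
    qed
    have "t = seg_start r (q div SL) + q mod SL" using t False q by (simp add: seg_start_def RL_def SL_def L_def q_def)
    moreover have "q mod SL < SL" using SLp by simp
    ultimately show ?thesis using sg by (intro segment[of "q div SL" "q mod SL"]) (simp_all add: L_def SL_def)
  qed
qed

lemma active_sweep_slot:
  assumes sg: "sg < 2 * nbits N + 1" and w: "w < 2 * card V"
    and a: "act (cfg (Suc (seg_start r sg) + w) v) \<noteq> Idle"
  shows "w \<in> active_sweep_offsets v r sg"
proof -
  define t where "t = Suc (seg_start r sg) + w"
  have md: "slot_mode (card V) N t = Sweep r sg w" using slot_mode_Sweep[OF sg w] by (simp add: t_def seg_start_def)
  have "\<forall>w'<w. \<not> commit (card V) N (Suc (seg_start r sg) + w')"
  proof (intro allI impI)
    fix w' assume "w' < w"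
    then have "w' < 2 * card V" "w' + 1 \<noteq> 2 * card V" using w by auto
    then show "\<not> commit (card V) N (Suc (seg_start r sg) + w')"
      using commit_Sweep[OF slot_mode_Sweep[OF sg]] by (simp add: seg_start_def)
  qed
  then have known: "known_at t v = known_at (Suc (seg_start r sg)) v" unfolding t_def by (rule known_at_const)
  have "act (cfg t v) = (case sweep_act (card V) w (level (known_at t v) v) of
        Some True \<Rightarrow> Transmit (cfg t v) | Some False \<Rightarrow> Listen | None \<Rightarrow> Idle)"
    by (rule act_Sweep[OF md])
  then have "sweep_act (card V) w (level (known_at t v) v) \<noteq> None"
    using a by (auto simp: t_def split: option.splits bool.splits)
  then show ?thesis using w known by (simp add: active_sweep_offsets_def)
qed

lemma active_in_active_slots:
  assumes t1: "r * round_len (card V) N \<le> t" and t2: "t < Suc r * round_len (card V) N"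
    and a: "act (cfg t v) \<noteq> Idle"
  shows "t \<in> active_slots v r"
  using t1 t2
proof (cases rule: slot_in_round_cases)
  case (exchange o')
  then show ?thesis unfolding active_slots_def by auto
next
  case (segment sg p)
  show ?thesis
  proof (cases p)
    case 0
    then show ?thesis unfolding active_slots_def using segment by auto
  next
    case (Suc w)
    then have w: "w < 2 * card V" using segment(2) by (simp add: sweep_len_def)
    have tw: "t = Suc (seg_start r sg) + w" using segment(3) Suc by simp
    have "w \<in> active_sweep_offsets v r sg" using active_sweep_slot[OF segment(1) w] a tw by simp
    then show ?thesis unfolding active_slots_def using segment(1) tw by auto
  qed
qed

lemma energy_bound:
  "card {t. t < R * round_len (card V) N \<and> act (cfg t v) \<noteq> Idle} \<le> R * (2 * nbits N + (2 * nbits N + 1) * 5)"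
proof -
  have "{t. t < R * round_len (card V) N \<and> act (cfg t v) \<noteq> Idle} \<subseteq> (\<Union>r<R. active_slots v r)"
  proof
    fix t assume t: "t \<in> {t. t < R * round_len (card V) N \<and> act (cfg t v) \<noteq> Idle}"
    define r where "r = t div round_len (card V) N"
    have RLp: "0 < round_len (card V) N" by (simp add: round_len_def sweep_len_def)
    have "r * round_len (card V) N \<le> t" unfolding r_def by (metis div_mult_mod_eq le_add1)
    moreover have "t < Suc r * round_len (card V) N" using RLp
      by (simp add: r_def) (metis add.commute div_mult_mod_eq mod_less_divisor nat_add_left_cancel_less)
    moreover have "r < R" using t RLp by (simp add: r_def less_mult_imp_div_less)
    ultimately show "t \<in> (\<Union>r<R. active_slots v r)" using active_in_active_slots t by blast
  qed
  then have "card {t. t < R * round_len (card V) N \<and> act (cfg t v) \<noteq> Idle} \<le> card (\<Union>r<R. active_slots v r)"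
    by (intro card_mono) (auto simp: active_slots_def active_sweep_offsets_def)
  also have "\<dots> \<le> (\<Sum>r<R. card (active_slots v r))" by (rule card_UN_le) simp
  also have "\<dots> \<le> (\<Sum>r<R. 2 * nbits N + (2 * nbits N + 1) * 5)" by (rule sum_mono) (rule active_slots_card)
  finally show ?thesis by simp
qed

lemma broadcast_output:
  assumes sV: "s \<in> V" and v: "v \<in> V"
  shows "fst (cfg (broadcast_time (card V) N) v) = Some m"
proof -
  define R where "R = 2 * nbits (card V)"
  have "collected_at (R * round_len (card V) N) v = pooled (facts R) (cluster R v)"
    using round_start_all v unfolding round_start_def by blast
  also have "cluster R v = V" using cluster_final v by (simp add: R_def)
  finally have "Me s \<in> collected_at (R * round_len (card V) N) v"
    using sV by (auto simp: pooled_def facts_Me)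
  then show ?thesis using msg_inv by (simp add: broadcast_time_def R_def)
qed

end

end

section \<open>Arbitrary identifiers and the complexity bounds\<close>

definition relabel_edges :: "(nat \<Rightarrow> nat) \<Rightarrow> nat set \<Rightarrow> (nat \<Rightarrow> nat \<Rightarrow> bool) \<Rightarrow> nat \<Rightarrow> nat \<Rightarrow> bool" where
  "relabel_edges ID V E a b = (\<exists>u\<in>V. \<exists>w\<in>V. ID u = a \<and> ID w = b \<and> E u w)"

lemma radio_network_relabel:
  assumes rn: "radio_network V E" and inj: "inj_on ID V"
  shows "radio_network (ID ` V) (relabel_edges ID V E)"
proof -
  have Ein: "\<forall>u v. E u v \<longrightarrow> u \<in> V \<and> v \<in> V" "\<forall>u v. E u v \<longrightarrow> E v u" "\<forall>u. \<not> E u u"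
    "\<forall>u\<in>V. \<forall>v\<in>V. E\<^sup>*\<^sup>* u v" using rn by (auto simp: radio_network_def)
  have reach: "(relabel_edges ID V E)\<^sup>*\<^sup>* (ID u) (ID w)" if "E\<^sup>*\<^sup>* u w" for u w
    using that
  proof (induction rule: rtranclp_induct)
    case (step y z)
    then have "relabel_edges ID V E (ID y) (ID z)" using Ein(1) unfolding relabel_edges_def by blast
    then show ?case using step by (meson rtranclp.rtrancl_into_rtrancl)
  qed simp
  have irrefl: "\<not> relabel_edges ID V E a a" for a
    using inj Ein(3) unfolding relabel_edges_def by (auto dest: inj_onD)
  show ?thesis
    using rn Ein(2,4) reach irrefl unfolding radio_network_def relabel_edges_def
    by (smt (verit, best) image_iff image_is_empty finite_imageI)
qed

lemma exec_relabel:
  assumes inj: "inj_on ID V" and finV: "finite V" and sV: "s \<in> V" and v: "v \<in> V"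
  shows "exec A N V E ID s m t v = exec A N (ID ` V) (relabel_edges ID V E) (\<lambda>x. x) (ID s) m t (ID v)"
  using v
proof (induction t arbitrary: v)
  case 0
  have "card (ID ` V) = card V" using inj by (rule card_image)
  moreover have "(ID v = ID s) = (v = s)" using inj 0 sV by (auto dest: inj_onD)
  ultimately show ?case by simp
next
  case (Suc t)
  define E' where "E' = relabel_edges ID V E"
  define cur where "cur = exec A N V E ID s m t"
  define cur' where "cur' = exec A N (ID ` V) E' (\<lambda>x. x) (ID s) m t"
  have IH: "u \<in> V \<Longrightarrow> cur u = cur' (ID u)" for u using Suc.IH by (simp add: cur_def cur'_def E'_def)
  define B where "B = {u \<in> V. E v u \<and> is_transmit (a_act A (cur u))}"
  have finB: "finite B" using finV by (simp add: B_def)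
  have BV: "B \<subseteq> V" by (auto simp: B_def)
  have setEq: "{a \<in> ID ` V. E' (ID v) a \<and> is_transmit (a_act A (cur' a))} = ID ` B"
  proof
    show "{a \<in> ID ` V. E' (ID v) a \<and> is_transmit (a_act A (cur' a))} \<subseteq> ID ` B"
    proof
      fix a assume "a \<in> {a \<in> ID ` V. E' (ID v) a \<and> is_transmit (a_act A (cur' a))}"
      then obtain w u w' where w: "w \<in> V" "a = ID w" "u \<in> V" "w' \<in> V" "ID u = ID v" "ID w' = ID w" "E u w'"
        "is_transmit (a_act A (cur' a))" unfolding E'_def relabel_edges_def by blast
      have "u = v" "w' = w" using w inj Suc.prems by (auto dest: inj_onD)
      then show "a \<in> ID ` B" using w IH[of w] by (auto simp: B_def)
    qed
    show "ID ` B \<subseteq> {a \<in> ID ` V. E' (ID v) a \<and> is_transmit (a_act A (cur' a))}"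
      using IH Suc.prems by (auto simp: B_def E'_def relabel_edges_def)
  qed
  have ms: "mset_set (ID ` B) = image_mset ID (mset_set B)"
    using inj_on_subset[OF inj BV] by (simp add: image_mset_mset_set)
  have "image_mset (\<lambda>a. payload (a_act A (cur' a))) (mset_set {a \<in> ID ` V. E' (ID v) a \<and> is_transmit (a_act A (cur' a))})
      = image_mset (\<lambda>u. payload (a_act A (cur u))) (mset_set B)"
    unfolding setEq ms image_mset.compositionality
    by (rule image_mset_cong) (use finB BV IH in auto)
  then show ?case using IH[OF Suc.prems]
    by (simp add: cur_def cur'_def E'_def B_def Let_def)
qed

lemma broadcast_on_id_network:
  fixes m :: 'm
  assumes rn: "radio_network V E" and VN: "V \<subseteq> {1..N}" and two: "2 \<le> card V" and sV: "s \<in> V"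
    and v: "v \<in> V"
  shows "a_out broadcast_alg (exec broadcast_alg N V E (\<lambda>x. x) s m (broadcast_time (card V) N) v) = Some m"
    and "energy broadcast_alg N V E (\<lambda>x. x) s m (broadcast_time (card V) N) v \<le> energy_budget (card V) N"
proof -
  interpret net V E N using rn VN two by unfold_locales
  show "a_out broadcast_alg (exec broadcast_alg N V E (\<lambda>x. x) s m (broadcast_time (card V) N) v) = Some m"
    using broadcast_output[OF sV v] by (simp add: broadcast_alg_def cfg_def)
  show "energy broadcast_alg N V E (\<lambda>x. x) s m (broadcast_time (card V) N) v \<le> energy_budget (card V) N"
  proof -
    have "card {t. t < 2 * nbits (card V) * round_len (card V) N \<and> act (cfg s m t v) \<noteq> Idle}
        \<le> 2 * nbits (card V) * (2 * nbits N + (2 * nbits N + 1) * 5)"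
      by (rule energy_bound)
    then show ?thesis by (simp add: energy_def broadcast_alg_def cfg_def broadcast_time_def energy_budget_def)
  qed
qed

lemma broadcast_with_ids:
  fixes m :: 'm
  assumes rn: "radio_network V E" and ids: "id_assignment V ID N" and two: "2 \<le> card V"
    and sV: "s \<in> V" and v: "v \<in> V"
  shows "a_out broadcast_alg (exec broadcast_alg N V E ID s m (broadcast_time (card V) N) v) = Some m"
    and "energy broadcast_alg N V E ID s m (broadcast_time (card V) N) v \<le> energy_budget (card V) N"
proof -
  have inj: "inj_on ID V" and VN: "ID ` V \<subseteq> {1..N}" using ids by (auto simp: id_assignment_def)
  have finV: "finite V" using rn by (simp add: radio_network_def)
  have n: "card (ID ` V) = card V" using inj by (rule card_image)
  note relabel = exec_relabel[OF inj finV sV]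
  note main = broadcast_on_id_network[OF radio_network_relabel[OF rn inj] VN, unfolded n,
      OF two imageI[OF sV] imageI[OF v], of m]
  show "a_out broadcast_alg (exec broadcast_alg N V E ID s m (broadcast_time (card V) N) v) = Some m"
    unfolding relabel[OF v] by (rule main(1))
  show "energy broadcast_alg N V E ID s m (broadcast_time (card V) N) v \<le> energy_budget (card V) N"
    using main(2) unfolding energy_def relabel[OF v] .
qed

lemma nbits_log: "1 \<le> N \<Longrightarrow> real (nbits N) \<le> log 2 (real N) + 1"
proof -
  assume N: "1 \<le> N"
  have "real (nbits N - 1) \<le> log 2 (real N)" using le_log2_of_power[OF nbits_le[OF N]] by simp
  then show ?thesis using nbits_pos[OF N] by (simp add: of_nat_diff)
qed

lemma nbits_mult_log:
  assumes "1 \<le> n" "1 \<le> N"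
  shows "real (nbits n * nbits N) \<le> (log 2 (real n) + 1) * (log 2 (real N) + 1)"
  using nbits_log[OF assms(1)] nbits_log[OF assms(2)] by (simp add: mult_mono)

lemma broadcast_time_le:
  assumes "2 \<le> n" "1 \<le> N"
  shows "real (broadcast_time n N) \<le> 34 * real n * (log 2 (real n) + 1) * (log 2 (real N) + 1)"
proof -
  have L: "1 \<le> nbits N" using nbits_pos[OF assms(2)] .
  have "round_len n N = 2 * nbits N + (2 * nbits N + 1) * (2 * n + 1)"
    by (simp add: round_len_def sweep_len_def)
  also have "\<dots> \<le> 2 * nbits N + (3 * nbits N) * (3 * n)"
    using L assms(1) by (intro add_le_mono mult_le_mono) auto
  also have "\<dots> \<le> 17 * nbits N * n" using assms(1) by simp
  finally have "broadcast_time n N \<le> 2 * nbits n * (17 * nbits N * n)"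
    unfolding broadcast_time_def by (rule mult_le_mono2)
  also have "\<dots> = 34 * n * (nbits n * nbits N)" by (simp add: ac_simps)
  finally have "real (broadcast_time n N) \<le> 34 * real n * real (nbits n * nbits N)"
    by (metis of_nat_le_iff of_nat_mult of_nat_numeral)
  also have "\<dots> \<le> 34 * real n * ((log 2 (real n) + 1) * (log 2 (real N) + 1))"
    using nbits_mult_log assms by (intro mult_left_mono) auto
  finally show ?thesis by (simp only: mult.assoc)
qed

lemma energy_budget_le:
  assumes "1 \<le> n" "1 \<le> N"
  shows "real (energy_budget n N) \<le> 34 * (log 2 (real n) + 1) * (log 2 (real N) + 1)"
proof -
  have "energy_budget n N \<le> 34 * (nbits n * nbits N)"
    using nbits_pos[OF assms(2)] by (simp add: energy_budget_def algebra_simps)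
  then have "real (energy_budget n N) \<le> 34 * real (nbits n * nbits N)"
    by (metis of_nat_le_iff of_nat_mult of_nat_numeral)
  also have "\<dots> \<le> 34 * ((log 2 (real n) + 1) * (log 2 (real N) + 1))"
    using nbits_mult_log assms by (intro mult_left_mono) auto
  finally show ?thesis by (simp only: mult.assoc)
qed

lemma broadcast_single_vertex:
  assumes "card V = 1" and "s \<in> V" and "v \<in> V"
  shows "a_out broadcast_alg (exec broadcast_alg N V E ID s m 0 v) = Some m"
proof -
  have "V = {s}" using assms(1,2) card_1_singletonE by (metis singletonD)
  then show ?thesis using assms(3) by (simp add: broadcast_alg_def init_def)
qed

lemma id_assignment_card_le: "id_assignment V ID N \<Longrightarrow> card V \<le> N"
  using card_mono[of "{1..N}" "ID ` V"] card_image[of ID V] by (simp add: id_assignment_def)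

lemma broadcast_complexity:
  fixes m :: 'm
  assumes rn: "radio_network V E" and ids: "id_assignment V ID N" and sV: "s \<in> V"
    and two: "2 \<le> card V"
  shows "real (broadcast_time (card V) N) \<le> 34 * real (card V) * (log 2 (real (card V)) + 1) * (log 2 (real N) + 1) \<and>
    (\<forall>v\<in>V. a_out broadcast_alg (exec broadcast_alg N V E ID s m (broadcast_time (card V) N) v) = Some m) \<and>
    (\<forall>v\<in>V. real (energy broadcast_alg N V E ID s m (broadcast_time (card V) N) v)
       \<le> 34 * (log 2 (real (card V)) + 1) * (log 2 (real N) + 1))"
proof (intro conjI ballI)
  have N: "1 \<le> N" using id_assignment_card_le[OF ids] two by simp
  then show "real (broadcast_time (card V) N)
      \<le> 34 * real (card V) * (log 2 (real (card V)) + 1) * (log 2 (real N) + 1)"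
    by (rule broadcast_time_le[OF two])
  fix v assume v: "v \<in> V"
  show "a_out broadcast_alg (exec broadcast_alg N V E ID s m (broadcast_time (card V) N) v) = Some m"
    by (rule broadcast_with_ids(1)[OF rn ids two sV v])
  have "energy broadcast_alg N V E ID s m (broadcast_time (card V) N) v \<le> energy_budget (card V) N"
    by (rule broadcast_with_ids(2)[OF rn ids two sV v])
  then have "real (energy broadcast_alg N V E ID s m (broadcast_time (card V) N) v)
      \<le> real (energy_budget (card V) N)" by (rule of_nat_mono)
  also have "\<dots> \<le> 34 * (log 2 (real (card V)) + 1) * (log 2 (real N) + 1)"
    using energy_budget_le two N by simp
  finally show "real (energy broadcast_alg N V E ID s m (broadcast_time (card V) N) v)
      \<le> 34 * (log 2 (real (card V)) + 1) * (log 2 (real N) + 1)" .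
qed

theorem theorem9:
  shows "\<exists>(A :: 'm algo) (C :: real). C > 0 \<and>
    (\<forall>V E ID N s (m :: 'm).
       radio_network V E \<and> id_assignment V ID N \<and> s \<in> V \<longrightarrow>
       (\<exists>T :: nat.
          real T \<le> C * real (card V) * (log 2 (real (card V)) + 1) * (log 2 (real N) + 1) \<and>
          (\<forall>v\<in>V. a_out A (exec A N V E ID s m T v) = Some m) \<and>
          (\<forall>v\<in>V. real (energy A N V E ID s m T v)
                   \<le> C * (log 2 (real (card V)) + 1) * (log 2 (real N) + 1))))"
proof (intro exI[of _ broadcast_alg] exI[of _ "34::real"] conjI allI impI)
  show "(34::real) > 0" by simp
  fix V E ID N s and m :: 'm
  assume "radio_network V E \<and> id_assignment V ID N \<and> s \<in> V"
  then have rn: "radio_network V E" and ids: "id_assignment V ID N" and sV: "s \<in> V" by auto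
  have n: "1 \<le> card V" using rn by (simp add: radio_network_def Suc_le_eq card_gt_0_iff)
  show "\<exists>T. real T \<le> 34 * real (card V) * (log 2 (real (card V)) + 1) * (log 2 (real N) + 1) \<and>
      (\<forall>v\<in>V. a_out broadcast_alg (exec broadcast_alg N V E ID s m T v) = Some m) \<and>
      (\<forall>v\<in>V. real (energy broadcast_alg N V E ID s m T v) \<le> 34 * (log 2 (real (card V)) + 1) * (log 2 (real N) + 1))"
  proof (cases "card V = 1")
    case True
    have "1 \<le> N" using id_assignment_card_le[OF ids] True by simp
    moreover have "a_out broadcast_alg (exec broadcast_alg N V E ID s m 0 v) = Some m" if "v \<in> V" for v
      by (rule broadcast_single_vertex[OF True sV that])
    ultimately show ?thesis using True by (intro exI[of _ 0]) (simp add: energy_def del: exec.simps)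
  next
    case False
    then show ?thesis using broadcast_complexity[OF rn ids sV] n by (intro exI) simp
  qed
qed

end
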